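(* Let $\Bbbk$ be an algebraically closed field of characteristic $2$ and let $\mathfrak{u}(\mathfrak{m})$ be the algebra generated by $a,b,c$ with relations $ab+ba=c$, $ac+ca=a$, $bc+cb=b$, $a^4=b^4=0$, $c^2+c=0$. Then the projective cover $P(V_0)$ and the injective envelope $I(V_0)$ of $V_0$ are both isomorphic to $M$, and the projective cover $P(V_1)$ and injective envelope $I(V_1)$ of $V_1$ are both isomorphic to $N$.
   Context: $V_0$ is the one-dimensional module with $a,b,c$ acting by $0$; $V_1$ is the three-dimensional module with basis $v_1,v_2,v_3$, $av_1=v_2$, $av_2=v_3$, $av_3=0$, $bv_1=0$, $bv_2=v_1$, $bv_3=v_2$, $cv_1=v_1$, $cv_2=0$, $cv_3=v_3$. $M$ is the $8$-dimensional module with basis $v_1,\dots,v_4,w_1,\dots,w_4$ and action: $av_i=v_{i+1}$ ($i=1,2,3$), $av_4=0$; $bv_1=bv_4=0$, $bv_i=v_{i-1}$ ($i=2,3$); $cv_i=v_i$ ($i=1,3$), $cv_i=0$ ($i=2,4$); $aw_i=w_{i+1}$ ($i=1,2,3$), $aw_4=0$; $bw_i=v_{i+2}$ ($i=1,2$), $bw_i=w_{i-1}$ ($i=3,4$); $cw_i=0$ ($i=1,3$), $cw_i=w_i$ ($i=2,4$). $N$ is the $8$-dimensional module with basis $v_1,\dots,v_4,w_1,\dots,w_4$ and action: $av_i=v_{i+1}$ ($i=1,2,3$), $av_4=0$; $bv_i=0$ ($i=1,2$), $bv_i=v_{i-1}$ ($i=3,4$); $cv_i=0$ ($i=1,3$),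 $cv_i=v_i$ ($i=2,4$); $aw_i=w_{i+1}$ ($i=1,2,3$), $aw_4=0$; $bw_i=v_i$ ($i=1,4$), $bw_i=v_i+w_{i-1}$ ($i=2,3$); $cw_i=w_i$ ($i=1,3$), $cw_i=0$ ($i=2,4$). *)

theory Defs
  imports "HOL-Computational_Algebra.Polynomial" "Jordan_Normal_Form.Matrix"
begin

text \<open>A finite-dimensional left module over the algebra u(m), generated by a, b, c,
  is represented on k^n (column vectors) by the three matrices through which a, b, c act.\<close>

record 'k urep =
  rdim :: nat
  ra :: "'k mat"
  rb :: "'k mat"
  rc :: "'k mat"

definition is_umod :: "'k::field urep \<Rightarrow> bool" where
  "is_umod V \<longleftrightarrow>
     (let n = rdim V; A = ra V; B = rb V; C = rc V in
      A \<in> carrier_mat n n \<and> B \<in> carrier_mat n n \<and> C \<in> carrier_mat n n \<and>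
      A * B + B * A = C \<and> A * C + C * A = A \<and> B * C + C * B = B \<and>
      A ^\<^sub>m 4 = 0\<^sub>m n n \<and> B ^\<^sub>m 4 = 0\<^sub>m n n \<and> C * C + C = 0\<^sub>m n n)"

definition is_hom :: "'k::field urep \<Rightarrow> 'k urep \<Rightarrow> 'k mat \<Rightarrow> bool" where
  "is_hom V W F \<longleftrightarrow> F \<in> carrier_mat (rdim W) (rdim V) \<and>
     F * ra V = ra W * F \<and> F * rb V = rb W * F \<and> F * rc V = rc W * F"

definition hom_surj :: "'k::field urep \<Rightarrow> 'k urep \<Rightarrow> 'k mat \<Rightarrow> bool" where
  "hom_surj V W F \<longleftrightarrow> (\<forall>y \<in> carrier_vec (rdim W). \<exists>x \<in> carrier_vec (rdim V). F *\<^sub>v x = y)"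

definition hom_inj :: "'k::field urep \<Rightarrow> 'k urep \<Rightarrow> 'k mat \<Rightarrow> bool" where
  "hom_inj V W F \<longleftrightarrow> (\<forall>x \<in> carrier_vec (rdim V). F *\<^sub>v x = 0\<^sub>v (rdim W) \<longrightarrow> x = 0\<^sub>v (rdim V))"

definition umod_iso :: "'k::field urep \<Rightarrow> 'k urep \<Rightarrow> bool" where
  "umod_iso V W \<longleftrightarrow> (\<exists>F G. is_hom V W F \<and> is_hom W V G \<and>
      G * F = 1\<^sub>m (rdim V) \<and> F * G = 1\<^sub>m (rdim W))"

definition is_submod :: "'k::field vec set \<Rightarrow> 'k urep \<Rightarrow> bool" where
  "is_submod L V \<longleftrightarrow> L \<subseteq> carrier_vec (rdim V) \<and> 0\<^sub>v (rdim V) \<in> L \<and>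
     (\<forall>x\<in>L. \<forall>y\<in>L. x + y \<in> L) \<and> (\<forall>s. \<forall>x\<in>L. s \<cdot>\<^sub>v x \<in> L) \<and>
     (\<forall>x\<in>L. ra V *\<^sub>v x \<in> L \<and> rb V *\<^sub>v x \<in> L \<and> rc V *\<^sub>v x \<in> L)"

definition is_projective :: "'k::field urep \<Rightarrow> bool" where
  "is_projective P \<longleftrightarrow> is_umod P \<and>
     (\<forall>X Y f g. is_umod X \<and> is_umod Y \<and> is_hom X Y f \<and> hom_surj X Y f \<and> is_hom P Y g
        \<longrightarrow> (\<exists>h. is_hom P X h \<and> f * h = g))"

definition is_injective :: "'k::field urep \<Rightarrow> bool" where
  "is_injective I \<longleftrightarrow> is_umod I \<and>
     (\<forall>X Y f g. is_umod X \<and> is_umod Y \<and> is_hom X Y f \<and> hom_inj X Y f \<and> is_hom X I g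
        \<longrightarrow> (\<exists>h. is_hom Y I h \<and> h * f = g))"

text \<open>Projective cover: projective P with an epimorphism P \<rightarrow> V whose kernel is superfluous.\<close>
definition is_projective_cover :: "'k::field urep \<Rightarrow> 'k mat \<Rightarrow> 'k urep \<Rightarrow> bool" where
  "is_projective_cover P p V \<longleftrightarrow> is_projective P \<and> is_umod V \<and> is_hom P V p \<and> hom_surj P V p \<and>
     (\<forall>L. is_submod L P \<and>
        (\<forall>x \<in> carrier_vec (rdim P). \<exists>l\<in>L. \<exists>k \<in> carrier_vec (rdim P).
            p *\<^sub>v k = 0\<^sub>v (rdim V) \<and> x = l + k)
        \<longrightarrow> L = carrier_vec (rdim P))"

text \<open>Injective envelope: injective I with a monomorphism V \<rightarrow> I whose image is essential.\<close>
definition is_injective_envelope :: "'k::field urep \<Rightarrow> 'k mat \<Rightarrow> 'k urep \<Rightarrow> bool" where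
  "is_injective_envelope I i V \<longleftrightarrow> is_injective I \<and> is_umod V \<and> is_hom V I i \<and> hom_inj V I i \<and>
     (\<forall>L. is_submod L I \<and> L \<noteq> {0\<^sub>v (rdim I)} \<longrightarrow>
        (\<exists>x \<in> carrier_vec (rdim V). i *\<^sub>v x \<in> L \<and> i *\<^sub>v x \<noteq> 0\<^sub>v (rdim I)))"

text \<open>Matrix of an endomorphism of k^n sending basis vector e_j to the sum of the basis vectors
  e_i with i in imgs!j (indices 0-based).\<close>
definition basis_mat :: "nat \<Rightarrow> nat list list \<Rightarrow> 'k::field mat" where
  "basis_mat n imgs = mat n n (\<lambda>(i, j). if i \<in> set (imgs ! j) then 1 else 0)"

definition V0 :: "'k::field urep" where
  "V0 = \<lparr>rdim = 1, ra = 0\<^sub>m 1 1, rb = 0\<^sub>m 1 1, rc = 0\<^sub>m 1 1\<rparr>"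

text \<open>V_1: basis v1,v2,v3 = indices 0,1,2.\<close>
definition V1 :: "'k::field urep" where
  "V1 = \<lparr>rdim = 3,
          ra = basis_mat 3 [[1],[2],[]],
          rb = basis_mat 3 [[],[0],[1]],
          rc = basis_mat 3 [[0],[],[2]]\<rparr>"

text \<open>M and N: basis v1..v4 = indices 0..3, w1..w4 = indices 4..7.\<close>
definition M :: "'k::field urep" where
  "M = \<lparr>rdim = 8,
         ra = basis_mat 8 [[1],[2],[3],[],[5],[6],[7],[]],
         rb = basis_mat 8 [[],[0],[1],[],[2],[3],[5],[6]],
         rc = basis_mat 8 [[0],[],[2],[],[],[5],[],[7]]\<rparr>"

definition N :: "'k::field urep" where
  "N = \<lparr>rdim = 8,
         ra = basis_mat 8 [[1],[2],[3],[],[5],[6],[7],[]],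
         rb = basis_mat 8 [[],[],[1],[2],[0],[1,4],[2,5],[3]],
         rc = basis_mat 8 [[],[1],[],[3],[4],[],[6],[]]\<rparr>"

end

theory Submission
  imports Defs "HOL-Library.Function_Algebras" "Jordan_Normal_Form.Determinant"
begin

(* Since c^2 = c in characteristic 2, the left ideal Q = u(m)(1 + c) is a projective module of
   dimension 16, with basis the words a^i b^k (1 + c), i, k < 4; a homomorphism Q -> X is the
   same as a vector of X killed by c. Both M and N, and also their duals (transposed actions),
   are direct summands of Q, so M and N are projective and injective. Every vector of M outside
   the kernel of M -> V0 generates M, and every nonzero submodule of M contains the image of
   V0 -> M; the same holds for N and V1. So M -> V0 and N -> V1 are projective covers and
   V0 -> M, V1 -> N are injective envelopes, and covers and envelopes are unique up to
   isomorphism because an endomorphism fixing the cover map (resp. the envelope map) is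
   surjective (resp. injective), hence invertible. *)

section \<open>Matrices with entries in \<open>{0, 1}\<close> over a field of characteristic 2\<close>

lemma char2_two: "CHAR('k::field) = 2 \<Longrightarrow> (2::'k) = 0"
  using of_nat_CHAR[where 'a='k] by simp

lemma char2_add_self:
  assumes "CHAR('k::field) = 2"
  shows "(x::'k) + x = 0"
  using char2_two[OF assms] by (metis mult_2 mult_zero_left)

lemma char2_of_nat:
  assumes "CHAR('k::field) = 2"
  shows "(of_nat n :: 'k) = (if odd n then 1 else 0)"
proof (cases "even n")
  case True
  then show ?thesis using assms by (simp add: of_nat_eq_0_iff_char_dvd)
next
  case False
  then obtain k where "n = 2 * k + 1" by (elim oddE)
  then show ?thesis using False char2_two[OF assms] by simp
qed

text \<open>A 0/1 matrix is stored as the list of the supports of its columns. In characteristic 2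
  sums and products of such matrices are again 0/1 matrices whose column supports are computed
  by list operations, so every identity between the concrete matrices of the theorem becomes a
  closed computation.\<close>

definition basis_rect_mat :: "nat \<Rightarrow> nat \<Rightarrow> nat list list \<Rightarrow> 'k::field mat" where
  "basis_rect_mat n m imgs = mat n m (\<lambda>(i, j). if i \<in> set (imgs ! j) then 1 else 0)"

definition basis_wf :: "nat \<Rightarrow> nat list list \<Rightarrow> bool" where
  "basis_wf m imgs \<longleftrightarrow> (\<forall>J \<in> set imgs. distinct J \<and> (\<forall>l \<in> set J. l < m))"

definition basis_mult :: "nat \<Rightarrow> nat list list \<Rightarrow> nat list list \<Rightarrow> nat list list" where
  "basis_mult n I1 I2 =
     map (\<lambda>J. filter (\<lambda>i. odd (length (filter (\<lambda>l. i \<in> set (I1 ! l)) J))) [0..<n]) I2"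

definition basis_add :: "nat \<Rightarrow> nat list list \<Rightarrow> nat list list \<Rightarrow> nat list list" where
  "basis_add n I1 I2 = map2 (\<lambda>J1 J2. filter (\<lambda>i. (i \<in> set J1) \<noteq> (i \<in> set J2)) [0..<n]) I1 I2"

definition basis_normalize :: "nat \<Rightarrow> nat list list \<Rightarrow> nat list list" where
  "basis_normalize n imgs = map (\<lambda>J. filter (\<lambda>i. i \<in> set J) [0..<n]) imgs"

definition basis_transpose :: "nat \<Rightarrow> nat \<Rightarrow> nat list list \<Rightarrow> nat list list" where
  "basis_transpose n m imgs = map (\<lambda>i. filter (\<lambda>j. i \<in> set (imgs ! j)) [0..<m]) [0..<n]"

lemma basis_wf_code [code]:
  "basis_wf m imgs = list_all (\<lambda>J. distinct J \<and> list_all (\<lambda>l. l < m) J) imgs"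
  unfolding basis_wf_def by (simp add: list_all_iff)

lemma basis_mat_eq_rect: "basis_mat n imgs = basis_rect_mat n n imgs"
  unfolding basis_mat_def basis_rect_mat_def by simp

lemma basis_rect_mat_carrier [simp]: "basis_rect_mat n m imgs \<in> carrier_mat n m"
  and basis_rect_mat_dims [simp]:
    "dim_row (basis_rect_mat n m imgs) = n" "dim_col (basis_rect_mat n m imgs) = m"
  unfolding basis_rect_mat_def by auto

lemma basis_rect_mat_index [simp]:
  "i < n \<Longrightarrow> j < m \<Longrightarrow> basis_rect_mat n m imgs $$ (i, j) = (if i \<in> set (imgs ! j) then 1 else 0)"
  unfolding basis_rect_mat_def by simp

lemma length_basis_mult [simp]: "length (basis_mult n I1 I2) = length I2"
  by (simp add: basis_mult_def)

lemma length_basis_add [simp]: "length (basis_add n I1 I2) = min (length I1) (length I2)"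
  by (simp add: basis_add_def)

lemma basis_rect_mat_cong:
  assumes "length I1 = m" "length I2 = m" "basis_normalize n I1 = basis_normalize n I2"
  shows "(basis_rect_mat n m I1 :: 'k::field mat) = basis_rect_mat n m I2"
proof (rule eq_matI)
  fix i j assume "i < dim_row (basis_rect_mat n m I2 :: 'k mat)" "j < dim_col (basis_rect_mat n m I2 :: 'k mat)"
  then have i: "i < n" and j: "j < m" by auto
  from assms j have "set (filter (\<lambda>i. i \<in> set (I1 ! j)) [0..<n]) = set (filter (\<lambda>i. i \<in> set (I2 ! j)) [0..<n])"
    unfolding basis_normalize_def by (metis nth_map)
  with i have "(i \<in> set (I1 ! j)) = (i \<in> set (I2 ! j))" by (auto simp: set_eq_iff)
  with i j show "basis_rect_mat n m I1 $$ (i, j) = (basis_rect_mat n m I2 :: 'k mat) $$ (i, j)" by simp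
qed auto

lemma basis_rect_mat_mult:
  assumes char: "CHAR('k::field) = 2" and "length I2 = p" and wf: "basis_wf m I2"
  shows "(basis_rect_mat n m I1 :: 'k mat) * basis_rect_mat m p I2 = basis_rect_mat n p (basis_mult n I1 I2)"
proof (rule eq_matI)
  fix i j
  assume "i < dim_row (basis_rect_mat n p (basis_mult n I1 I2) :: 'k mat)"
    and "j < dim_col (basis_rect_mat n p (basis_mult n I1 I2) :: 'k mat)"
  then have i: "i < n" and j: "j < p" by auto
  let ?J = "I2 ! j"
  let ?hits = "filter (\<lambda>l. i \<in> set (I1 ! l)) ?J"
  have J: "distinct ?J" "set ?J \<subseteq> {..<m}"
    using wf j assms(2) unfolding basis_wf_def by (auto simp: nth_mem)
  have "((basis_rect_mat n m I1 :: 'k mat) * basis_rect_mat m p I2) $$ (i, j) =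
        (\<Sum>l<m. (if i \<in> set (I1 ! l) then 1 else 0) * (if l \<in> set ?J then 1 else 0))"
    using i j by (simp add: scalar_prod_def lessThan_atLeast0)
  also have "\<dots> = (\<Sum>l\<in>set ?hits. 1)"
    using J by (intro sum.mono_neutral_cong_right) auto
  also have "\<dots> = of_nat (length ?hits)"
    using distinct_card[OF distinct_filter[OF J(1)]] by simp
  also have "\<dots> = basis_rect_mat n p (basis_mult n I1 I2) $$ (i, j)"
    using i j assms(2) by (simp add: basis_mult_def char2_of_nat[OF char])
  finally show "((basis_rect_mat n m I1 :: 'k mat) * basis_rect_mat m p I2) $$ (i, j) =
      basis_rect_mat n p (basis_mult n I1 I2) $$ (i, j)" .
qed auto

lemma basis_rect_mat_add:
  assumes "CHAR('k::field) = 2" and "length I1 = m" "length I2 = m"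
  shows "(basis_rect_mat n m I1 :: 'k mat) + basis_rect_mat n m I2 = basis_rect_mat n m (basis_add n I1 I2)"
  by (rule eq_matI) (use assms char2_add_self[OF assms(1), of 1] in \<open>auto simp: basis_add_def\<close>)

lemma zero_mat_eq_basis: "0\<^sub>m n m = (basis_rect_mat n m (replicate m []) :: 'k::field mat)"
  by (rule eq_matI) auto

lemma one_mat_eq_basis: "1\<^sub>m n = (basis_rect_mat n n (map (\<lambda>j. [j]) [0..<n]) :: 'k::field mat)"
  by (rule eq_matI) auto

lemma transpose_basis_rect_mat:
  "transpose_mat (basis_rect_mat n m imgs :: 'k::field mat) = basis_rect_mat m n (basis_transpose n m imgs)"
  by (rule eq_matI) (auto simp: basis_transpose_def)

lemma pow_mat_4: "(A :: 'k::field mat) \<in> carrier_mat n n \<Longrightarrow> A ^\<^sub>m 4 = A * A * A * A"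
  by (simp add: numeral_eq_Suc)

lemma basis_rect_mat_mult_vec_index:
  assumes x: "x \<in> carrier_vec m" and i: "i < n"
  shows "(basis_rect_mat n m imgs *\<^sub>v x) $ i = sum_list (map (\<lambda>l. x $ l) (basis_transpose n m imgs ! i))"
proof -
  let ?S = "filter (\<lambda>l. i \<in> set (imgs ! l)) [0..<m]"
  have "(basis_rect_mat n m imgs *\<^sub>v x) $ i = (\<Sum>l<m. (if i \<in> set (imgs ! l) then 1 else 0) * x $ l)"
    using x i by (simp add: scalar_prod_def lessThan_atLeast0)
  also have "\<dots> = (\<Sum>l\<in>set ?S. x $ l)"
    by (intro sum.mono_neutral_cong_right) auto
  also have "\<dots> = sum_list (map (\<lambda>l. x $ l) ?S)"
    by (simp add: sum_list_distinct_conv_sum_set)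
  finally show ?thesis using i by (simp add: basis_transpose_def)
qed

definition basis_umod_check :: "nat \<Rightarrow> nat list list \<Rightarrow> nat list list \<Rightarrow> nat list list \<Rightarrow> bool" where
  "basis_umod_check n IA IB IC \<longleftrightarrow>
     basis_wf n IA \<and> basis_wf n IB \<and> basis_wf n IC \<and> length IA = n \<and> length IB = n \<and> length IC = n \<and>
     basis_normalize n (basis_add n (basis_mult n IA IB) (basis_mult n IB IA)) = basis_normalize n IC \<and>
     basis_normalize n (basis_add n (basis_mult n IA IC) (basis_mult n IC IA)) = basis_normalize n IA \<and>
     basis_normalize n (basis_add n (basis_mult n IB IC) (basis_mult n IC IB)) = basis_normalize n IB \<and>
     basis_normalize n (basis_mult n (basis_mult n (basis_mult n IA IA) IA) IA) =
       basis_normalize n (replicate n []) \<and>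
     basis_normalize n (basis_mult n (basis_mult n (basis_mult n IB IB) IB) IB) =
       basis_normalize n (replicate n []) \<and>
     basis_normalize n (basis_add n (basis_mult n IC IC) IC) = basis_normalize n (replicate n [])"

lemma is_umod_basisI:
  assumes char: "CHAR('k::field) = 2"
    and V: "rdim (V :: 'k urep) = n" "ra V = basis_rect_mat n n IA" "rb V = basis_rect_mat n n IB"
      "rc V = basis_rect_mat n n IC"
    and check: "basis_umod_check n IA IB IC"
  shows "is_umod V"
proof -
  let ?B = "basis_rect_mat n n :: nat list list \<Rightarrow> 'k mat"
  from check have wf: "basis_wf n IA" "basis_wf n IB" "basis_wf n IC"
    and len: "length IA = n" "length IB = n" "length IC = n"
    unfolding basis_umod_check_def by auto
  have mult: "?B I1 * ?B I2 = ?B (basis_mult n I1 I2)" if "basis_wf n I2" "length I2 = n" for I1 I2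
    using basis_rect_mat_mult[OF char] that by blast
  have add: "?B I1 + ?B I2 = ?B (basis_add n I1 I2)" if "length I1 = n" "length I2 = n" for I1 I2
    using basis_rect_mat_add[OF char] that by blast
  have cong: "?B I1 = ?B I2" if "length I1 = n" "length I2 = n"
    "basis_normalize n I1 = basis_normalize n I2" for I1 I2
    using basis_rect_mat_cong that by blast
  have pow4: "?B I ^\<^sub>m 4 = ?B (basis_mult n (basis_mult n (basis_mult n I I) I) I)"
    if "basis_wf n I" "length I = n" for I
    by (simp only: pow_mat_4[OF basis_rect_mat_carrier] mult[OF that])
  note eqs = mult[OF wf(1) len(1)] mult[OF wf(2) len(2)] mult[OF wf(3) len(3)]
    pow4[OF wf(1) len(1)] pow4[OF wf(2) len(2)] zero_mat_eq_basis
  from check show ?thesis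
    unfolding is_umod_def Let_def V basis_umod_check_def
    by (simp only: eqs add length_basis_mult len) (auto intro!: cong simp: len)
qed

definition basis_hom_check :: "nat \<Rightarrow> nat \<Rightarrow> nat list list \<Rightarrow> nat list list \<Rightarrow> nat list list \<Rightarrow>
    nat list list \<Rightarrow> nat list list \<Rightarrow> nat list list \<Rightarrow> nat list list \<Rightarrow> bool" where
  "basis_hom_check m n IF IVa IVb IVc IWa IWb IWc \<longleftrightarrow>
     basis_wf n IVa \<and> basis_wf n IVb \<and> basis_wf n IVc \<and> basis_wf m IF \<and>
     length IVa = n \<and> length IVb = n \<and> length IVc = n \<and> length IF = n \<and>
     basis_normalize m (basis_mult m IF IVa) = basis_normalize m (basis_mult m IWa IF) \<and>
     basis_normalize m (basis_mult m IF IVb) = basis_normalize m (basis_mult m IWb IF) \<and>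
     basis_normalize m (basis_mult m IF IVc) = basis_normalize m (basis_mult m IWc IF)"

lemma is_hom_basisI:
  assumes char: "CHAR('k::field) = 2"
    and V: "rdim (V :: 'k urep) = n" "ra V = basis_rect_mat n n IVa" "rb V = basis_rect_mat n n IVb"
      "rc V = basis_rect_mat n n IVc"
    and W: "rdim W = m" "ra W = basis_rect_mat m m IWa" "rb W = basis_rect_mat m m IWb"
      "rc W = basis_rect_mat m m IWc"
    and check: "basis_hom_check m n IF IVa IVb IVc IWa IWb IWc"
  shows "is_hom V W (basis_rect_mat m n IF)"
proof -
  from check have wf: "basis_wf n IVa" "basis_wf n IVb" "basis_wf n IVc" "basis_wf m IF"
    and len: "length IVa = n" "length IVb = n" "length IVc = n" "length IF = n"
    unfolding basis_hom_check_def by auto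
  note mult = basis_rect_mat_mult[OF char]
  note eqs = mult[OF len(1) wf(1)] mult[OF len(2) wf(2)] mult[OF len(3) wf(3)] mult[OF len(4) wf(4)]
  from check show ?thesis
    unfolding is_hom_def V W basis_hom_check_def
    by (simp only: eqs) (auto intro!: basis_rect_mat_cong simp: len)
qed

lemma basis_rect_mat_mult_eq_one:
  assumes "CHAR('k::field) = 2"
    and "basis_wf m IS \<and> length IS = n \<and>
      basis_normalize n (basis_mult n IT IS) = basis_normalize n (map (\<lambda>j. [j]) [0..<n])"
  shows "(basis_rect_mat n m IT :: 'k mat) * basis_rect_mat m n IS = 1\<^sub>m n"
  using assms by (simp add: basis_rect_mat_mult one_mat_eq_basis basis_rect_mat_cong)

section \<open>Actions of the restricted enveloping algebra\<close>

text \<open>Functions \<open>nat \<Rightarrow> 'k\<close> form an abelian group, unlike vectors of varying dimension, so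
  the defining relations can be manipulated by the simplifier as identities between operators.\<close>

definition mat_app :: "'k::field mat \<Rightarrow> (nat \<Rightarrow> 'k) \<Rightarrow> nat \<Rightarrow> 'k" where
  "mat_app A v = (\<lambda>i. if i < dim_row A then (\<Sum>j\<in>{0..<dim_col A}. A $$ (i, j) * v j) else 0)"

definition vec_fun :: "'k::field vec \<Rightarrow> nat \<Rightarrow> 'k" where
  "vec_fun x = (\<lambda>i. if i < dim_vec x then x $ i else 0)"

lemma mat_app_add: "mat_app A (v + w) = mat_app A v + mat_app A w"
  by (auto simp: mat_app_def fun_eq_iff distrib_left sum.distrib)

lemma mat_app_add_mat:
  assumes "A \<in> carrier_mat n m" "B \<in> carrier_mat n m"
  shows "mat_app (A + B) v = mat_app A v + mat_app B v"
  using assms by (auto simp: mat_app_def fun_eq_iff distrib_right sum.distrib)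

lemma mat_app_zero_mat: "mat_app (0\<^sub>m n m) v = 0"
  by (auto simp: mat_app_def fun_eq_iff)

lemma mat_app_mult:
  assumes A: "A \<in> carrier_mat n m" and B: "B \<in> carrier_mat m p"
  shows "mat_app (A * B) v = mat_app A (mat_app B v)"
proof
  fix i
  show "mat_app (A * B) v i = mat_app A (mat_app B v) i"
  proof (cases "i < n")
    case True
    have "mat_app (A * B) v i = (\<Sum>j\<in>{0..<p}. (\<Sum>l\<in>{0..<m}. A $$ (i, l) * B $$ (l, j)) * v j)"
      using A B True by (simp add: mat_app_def scalar_prod_def)
    also have "\<dots> = (\<Sum>j\<in>{0..<p}. \<Sum>l\<in>{0..<m}. A $$ (i, l) * (B $$ (l, j) * v j))"
      by (simp add: sum_distrib_right mult.assoc)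
    also have "\<dots> = (\<Sum>l\<in>{0..<m}. \<Sum>j\<in>{0..<p}. A $$ (i, l) * (B $$ (l, j) * v j))"
      by (rule sum.swap)
    also have "\<dots> = mat_app A (mat_app B v) i"
      using A B True by (simp add: mat_app_def sum_distrib_left)
    finally show ?thesis .
  qed (use A B in \<open>simp add: mat_app_def\<close>)
qed

lemma mat_app_vec_fun:
  assumes "x \<in> carrier_vec (dim_col A)"
  shows "mat_app A (vec_fun x) = vec_fun (A *\<^sub>v x)"
  using assms by (auto simp: mat_app_def vec_fun_def fun_eq_iff scalar_prod_def intro!: sum.cong)

text \<open>In characteristic 2 the defining relations of u(m) hold verbatim for operators on an
  abelian group of exponent 2. An element \<open>f\<close> with \<open>c f = 0\<close> generates a quotient of
  \<open>Q = u(m)(1 + c)\<close>, spanned by the words \<open>a\<^sup>i b\<^sup>k f\<close>, \<open>i, k < 4\<close>, on which \<open>a\<close>, \<open>b\<close>, \<open>c\<close>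
  act as on the basis of \<open>Q\<close> described by \<open>Qa\<close>, \<open>Qb\<close>, \<open>Qc\<close>.\<close>

definition words :: "('v \<Rightarrow> 'v) \<Rightarrow> ('v \<Rightarrow> 'v) \<Rightarrow> 'v \<Rightarrow> 'v list" where
  "words a b f = [f, b f, b (b f), b (b (b f)),
     a f, a (b f), a (b (b f)), a (b (b (b f))),
     a (a f), a (a (b f)), a (a (b (b f))), a (a (b (b (b f)))),
     a (a (a f)), a (a (a (b f))), a (a (a (b (b f)))), a (a (a (b (b (b f)))))]"

lemma length_words [simp]: "length (words a b f) = 16"
  by (simp add: words_def)

locale um_action =
  fixes a b c :: "'v::ab_group_add \<Rightarrow> 'v"
  assumes a_add: "a (u + v) = a u + a v" and b_add: "b (u + v) = b u + b v"
    and c_add: "c (u + v) = c u + c v"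
    and ab: "a (b v) + b (a v) = c v" and ac: "a (c v) + c (a v) = a v"
    and bc: "b (c v) + c (b v) = b v" and cc: "c (c v) + c v = 0"
    and a4: "a (a (a (a v))) = 0" and b4: "b (b (b (b v))) = 0"
    and add_self: "v + v = 0"
begin

lemma add_self_left: "(v::'v) + (v + w) = w"
  by (simp add: add.assoc[symmetric] add_self)

lemma swap_summand: "(x::'v) + y = z \<Longrightarrow> y = x + z"
  using add_self_left[of x y] by simp

lemma a_zero: "a 0 = 0" using a_add[of 0 0] by simp
lemma b_zero: "b 0 = 0" using b_add[of 0 0] by simp
lemma c_zero: "c 0 = 0" using c_add[of 0 0] by simp

lemma ba: "b (a v) = a (b v) + c v" using swap_summand[OF ab] .
lemma ca: "c (a v) = a (c v) + a v" using swap_summand[OF ac] .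
lemma cb: "c (b v) = b (c v) + b v" using swap_summand[OF bc] .
lemma c_idem: "c (c v) = c v" using swap_summand[OF cc] by simp

text \<open>Rewriting to the normal form \<open>a\<^sup>i b\<^sup>k c\<^sup>l\<close>.\<close>
lemmas normalize = ba ca cb c_idem a4 b4 a_add b_add c_add a_zero b_zero c_zero
  add_self add_self_left add_ac

end

definition Qa :: "nat list list" where
  "Qa = [[4], [5], [6], [7], [8], [9], [10], [11], [12], [13], [14], [15], [], [], [], []]"
definition Qb :: "nat list list" where
  "Qb = [[1], [2], [3], [], [5], [6, 1], [7], [3], [9, 4], [10, 5], [11, 6], [7], [13, 8], [14],
    [15, 10], []]"
definition Qc :: "nat list list" where
  "Qc = [[], [1], [], [3], [4], [], [6], [], [], [9], [], [11], [12], [], [14], []]"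

lemma less_16_cases:
  "(j::nat) < 16 \<Longrightarrow> j = 0 \<or> j = 1 \<or> j = 2 \<or> j = 3 \<or> j = 4 \<or> j = 5 \<or> j = 6 \<or> j = 7 \<or>
     j = 8 \<or> j = 9 \<or> j = 10 \<or> j = 11 \<or> j = 12 \<or> j = 13 \<or> j = 14 \<or> j = 15"
  by presburger

context um_action
begin

lemma a_words: "j < 16 \<Longrightarrow> c f = 0 \<Longrightarrow> a (words a b f ! j) = sum_list (map ((!) (words a b f)) (Qa ! j))"
  by (drule less_16_cases) (elim disjE; simp add: words_def Qa_def normalize)

lemma b_words: "j < 16 \<Longrightarrow> c f = 0 \<Longrightarrow> b (words a b f ! j) = sum_list (map ((!) (words a b f)) (Qb ! j))"
  by (drule less_16_cases) (elim disjE; simp add: words_def Qb_def normalize)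

lemma c_words: "j < 16 \<Longrightarrow> c f = 0 \<Longrightarrow> c (words a b f ! j) = sum_list (map ((!) (words a b f)) (Qc ! j))"
  by (drule less_16_cases) (elim disjE; simp add: words_def Qc_def normalize)

end

lemma is_umod_carrier:
  assumes "is_umod V"
  shows "ra V \<in> carrier_mat (rdim V) (rdim V)" "rb V \<in> carrier_mat (rdim V) (rdim V)"
    "rc V \<in> carrier_mat (rdim V) (rdim V)"
  using assms unfolding is_umod_def Let_def by auto

lemma is_hom_carrier: "is_hom V W F \<Longrightarrow> F \<in> carrier_mat (rdim W) (rdim V)"
  unfolding is_hom_def by simp

lemma mult_mat_zero_vec: "A \<in> carrier_mat n m \<Longrightarrow> A *\<^sub>v 0\<^sub>v m = (0\<^sub>v n :: 'k::field vec)"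
  by (intro eq_vecI) (auto simp: scalar_prod_def)

lemma zero_mult_mat_vec: "v \<in> carrier_vec m \<Longrightarrow> 0\<^sub>m n m *\<^sub>v v = (0\<^sub>v n :: 'k::field vec)"
  by (intro eq_vecI) (auto simp: scalar_prod_def)

lemma mat_app_add_self:
  assumes "CHAR('k::field) = 2"
  shows "(v :: nat \<Rightarrow> 'k) + v = 0"
  using char2_add_self[OF assms] by (simp add: fun_eq_iff)

lemma um_action_mat_app:
  assumes U: "is_umod (X :: 'k::field urep)" and char: "CHAR('k) = 2"
  shows "um_action (mat_app (ra X)) (mat_app (rb X)) (mat_app (rc X))"
proof -
  let ?n = "rdim X"
  from U have A: "ra X \<in> carrier_mat ?n ?n" and B: "rb X \<in> carrier_mat ?n ?n"
    and C: "rc X \<in> carrier_mat ?n ?n"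
    and ab: "ra X * rb X + rb X * ra X = rc X" and ac: "ra X * rc X + rc X * ra X = ra X"
    and bc: "rb X * rc X + rc X * rb X = rb X" and a4: "ra X ^\<^sub>m 4 = 0\<^sub>m ?n ?n"
    and b4: "rb X ^\<^sub>m 4 = 0\<^sub>m ?n ?n" and cc: "rc X * rc X + rc X = 0\<^sub>m ?n ?n"
    unfolding is_umod_def Let_def by auto
  note app = mat_app_add_mat[of _ ?n ?n] mat_app_mult[of _ ?n ?n _ ?n] mat_app_zero_mat
  show ?thesis
  proof
    fix u v :: "nat \<Rightarrow> 'k"
    show "mat_app (ra X) (u + v) = mat_app (ra X) u + mat_app (ra X) v"
      "mat_app (rb X) (u + v) = mat_app (rb X) u + mat_app (rb X) v"
      "mat_app (rc X) (u + v) = mat_app (rc X) u + mat_app (rc X) v"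
      by (rule mat_app_add)+
    show "v + v = 0" by (rule mat_app_add_self[OF char])
    show "mat_app (ra X) (mat_app (rb X) v) + mat_app (rb X) (mat_app (ra X) v) = mat_app (rc X) v"
      using arg_cong[OF ab, of "\<lambda>T. mat_app T v"] A B by (simp add: app)
    show "mat_app (ra X) (mat_app (rc X) v) + mat_app (rc X) (mat_app (ra X) v) = mat_app (ra X) v"
      using arg_cong[OF ac, of "\<lambda>T. mat_app T v"] A C by (simp add: app)
    show "mat_app (rb X) (mat_app (rc X) v) + mat_app (rc X) (mat_app (rb X) v) = mat_app (rb X) v"
      using arg_cong[OF bc, of "\<lambda>T. mat_app T v"] B C by (simp add: app)
    show "mat_app (rc X) (mat_app (rc X) v) + mat_app (rc X) v = 0"
      using arg_cong[OF cc, of "\<lambda>T. mat_app T v"] C by (simp add: app)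
    show "mat_app (ra X) (mat_app (ra X) (mat_app (ra X) (mat_app (ra X) v))) = 0"
      using arg_cong[OF a4, of "\<lambda>T. mat_app T v"] A by (simp add: app pow_mat_4)
    show "mat_app (rb X) (mat_app (rb X) (mat_app (rb X) (mat_app (rb X) v))) = 0"
      using arg_cong[OF b4, of "\<lambda>T. mat_app T v"] B by (simp add: app pow_mat_4)
  qed
qed

lemma is_hom_mult:
  assumes U: "is_umod U" and V: "is_umod V" and W: "is_umod W"
    and F: "is_hom V W F" and G: "is_hom U V G"
  shows "is_hom U W (F * G)"
proof -
  have Fc: "F \<in> carrier_mat (rdim W) (rdim V)" and Gc: "G \<in> carrier_mat (rdim V) (rdim U)"
    using F G by (auto dest: is_hom_carrier)
  have comm: "F * G * XU = XW * (F * G)"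
    if XU: "XU \<in> carrier_mat (rdim U) (rdim U)" and XV: "XV \<in> carrier_mat (rdim V) (rdim V)"
      and XW: "XW \<in> carrier_mat (rdim W) (rdim W)" and "F * XV = XW * F" "G * XU = XV * G"
    for XU XV XW
  proof -
    have "F * G * XU = F * (XV * G)" using Fc Gc XU \<open>G * XU = XV * G\<close> by simp
    also have "\<dots> = (F * XV) * G" using Fc XV Gc by (rule assoc_mult_mat[symmetric])
    also have "\<dots> = (XW * F) * G" using \<open>F * XV = XW * F\<close> by simp
    also have "\<dots> = XW * (F * G)" using XW Fc Gc by simp
    finally show ?thesis .
  qed
  show ?thesis
    using F G Fc Gc comm is_umod_carrier[OF U] is_umod_carrier[OF V] is_umod_carrier[OF W]
    unfolding is_hom_def by auto
qed

lemma is_projectiveD: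
  assumes "is_projective P" "is_umod X" "is_umod Y" "is_hom X Y f" "hom_surj X Y f" "is_hom P Y g"
  shows "\<exists>h. is_hom P X h \<and> f * h = g"
  using assms unfolding is_projective_def by blast

lemma is_injectiveD:
  assumes "is_injective I" "is_umod X" "is_umod Y" "is_hom X Y f" "hom_inj X Y f" "is_hom X I g"
  shows "\<exists>h. is_hom Y I h \<and> h * f = g"
  using assms unfolding is_injective_def by blast

lemma is_hom_inverse:
  assumes S: "is_hom V V S" and T: "T \<in> carrier_mat (rdim V) (rdim V)" and V: "is_umod V"
    and ST: "S * T = 1\<^sub>m (rdim V)" and TS: "T * S = 1\<^sub>m (rdim V)"
  shows "is_hom V V T"
proof -
  let ?n = "rdim V"
  have Sc: "S \<in> carrier_mat ?n ?n" using S by (rule is_hom_carrier)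
  have comm: "T * X = X * T" if X: "X \<in> carrier_mat ?n ?n" and SX: "S * X = X * S" for X
  proof -
    have "T * X = T * X * (S * T)" using T X ST by simp
    also have "\<dots> = T * (S * X) * T"
      using T X Sc SX by (simp add: assoc_mult_mat[of _ ?n ?n _ ?n _ ?n])
    also have "\<dots> = (T * S) * (X * T)"
      using T X Sc by (simp add: assoc_mult_mat[of _ ?n ?n _ ?n _ ?n])
    also have "\<dots> = X * T" using TS X T by simp
    finally show ?thesis .
  qed
  show ?thesis using T S is_umod_carrier[OF V] comm unfolding is_hom_def by auto
qed

lemma is_hom_mat_app_commute:
  assumes "is_hom V W F" and "is_umod V" "is_umod W"
  shows "mat_app (ra W) (mat_app F v) = mat_app F (mat_app (ra V) v)"
    and "mat_app (rb W) (mat_app F v) = mat_app F (mat_app (rb V) v)"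
  using assms is_umod_carrier[of V] is_umod_carrier[of W]
  by (auto simp: is_hom_def mat_app_mult[symmetric] intro!: arg_cong[where f = "\<lambda>T. mat_app T v"])

section \<open>The projective module \<open>Q = u(m)(1 + c)\<close>\<close>

definition Qmod :: "'k::field urep" where
  "Qmod = \<lparr>rdim = 16, ra = basis_rect_mat 16 16 Qa, rb = basis_rect_mat 16 16 Qb,
     rc = basis_rect_mat 16 16 Qc\<rparr>"

lemma Qmod_simps [simp]:
  "rdim Qmod = 16" "ra Qmod = basis_rect_mat 16 16 Qa" "rb Qmod = basis_rect_mat 16 16 Qb"
  "rc Qmod = basis_rect_mat 16 16 Qc"
  unfolding Qmod_def by simp_all

lemma Q_basis_wf: "basis_wf 16 Qa" "basis_wf 16 Qb" "basis_wf 16 Qc"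
  "length Qa = 16" "length Qb = 16" "length Qc = 16"
  by code_simp+

lemma Q_umod_check: "basis_umod_check 16 Qa Qb Qc"
  by code_simp

lemma is_umod_Qmod: "CHAR('k::field) = 2 \<Longrightarrow> is_umod (Qmod :: 'k urep)"
  by (erule is_umod_basisI[OF _ _ _ _ _ Q_umod_check]) simp_all

text \<open>A homomorphism \<open>Q \<rightarrow> X\<close> sends the generator \<open>1 + c\<close> to a vector \<open>x\<close> with \<open>c x = 0\<close>
  and is determined by it: its columns are the words in \<open>a\<close>, \<open>b\<close> applied to \<open>x\<close>.\<close>

definition Qmod_hom :: "'k::field urep \<Rightarrow> 'k vec \<Rightarrow> 'k mat" where
  "Qmod_hom X x = mat (rdim X) 16 (\<lambda>(i, j). (words (mat_app (ra X)) (mat_app (rb X)) (vec_fun x) ! j) i)"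

lemma sum_list_map_apply: "sum_list (map (fs :: nat \<Rightarrow> nat \<Rightarrow> 'k::field) L) i = sum_list (map (\<lambda>l. fs l i) L)"
  by (induction L) auto

lemma mult_basis_rect_mat_index:
  assumes F: "F \<in> carrier_mat n m" and wf: "basis_wf m I" and "length I = p"
    and i: "i < n" and j: "j < p"
  shows "(F * (basis_rect_mat m p I :: 'k::field mat)) $$ (i, j) = sum_list (map (\<lambda>l. F $$ (i, l)) (I ! j))"
proof -
  have "I ! j \<in> set I" using j assms(3) by simp
  then have J: "distinct (I ! j)" "set (I ! j) \<subseteq> {0..<m}"
    using wf unfolding basis_wf_def by auto
  have "(F * (basis_rect_mat m p I :: 'k mat)) $$ (i, j) =
      (\<Sum>l\<in>{0..<m}. F $$ (i, l) * (if l \<in> set (I ! j) then 1 else 0))"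
    using F i j by (simp add: scalar_prod_def)
  also have "\<dots> = (\<Sum>l\<in>set (I ! j). F $$ (i, l))"
    using J by (intro sum.mono_neutral_cong_right) auto
  also have "\<dots> = sum_list (map (\<lambda>l. F $$ (i, l)) (I ! j))"
    using J by (simp add: sum_list_distinct_conv_sum_set)
  finally show ?thesis .
qed

lemma intertwine_basis_rect_mat:
  assumes X: "X \<in> carrier_mat n n" and wf: "basis_wf m I" and len: "length I = m"
    and w: "\<And>j. j < m \<Longrightarrow> mat_app X (w j) = sum_list (map w (I ! j))"
    and F: "F = mat n m (\<lambda>(i, j). w j i)"
  shows "F * (basis_rect_mat m m I :: 'k::field mat) = X * F"
proof (rule eq_matI)
  fix i j assume "i < dim_row (X * F)" "j < dim_col (X * F)"
  then have i: "i < n" and j: "j < m" using X F by auto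
  have "I ! j \<in> set I" using j len by simp
  then have sub: "set (I ! j) \<subseteq> {0..<m}" using wf unfolding basis_wf_def by auto
  have "(F * (basis_rect_mat m m I :: 'k mat)) $$ (i, j) = sum_list (map (\<lambda>l. F $$ (i, l)) (I ! j))"
    using F wf len i j by (intro mult_basis_rect_mat_index) auto
  also have "\<dots> = sum_list (map (\<lambda>l. w l i) (I ! j))"
    using sub i F by (intro arg_cong[where f = sum_list] map_cong) auto
  also have "\<dots> = mat_app X (w j) i" using w[OF j] by (simp add: sum_list_map_apply)
  also have "\<dots> = (X * F) $$ (i, j)"
    using X F i j by (simp add: mat_app_def scalar_prod_def)
  finally show "(F * (basis_rect_mat m m I :: 'k mat)) $$ (i, j) = (X * F) $$ (i, j)" .
qed (use X F in auto)

lemma is_hom_Qmod_hom: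
  assumes X: "is_umod (X :: 'k::field urep)" and char: "CHAR('k) = 2"
    and x: "x \<in> carrier_vec (rdim X)" and cx: "rc X *\<^sub>v x = 0\<^sub>v (rdim X)"
  shows "is_hom Qmod X (Qmod_hom X x)"
proof -
  interpret um_action "mat_app (ra X)" "mat_app (rb X)" "mat_app (rc X)"
    by (rule um_action_mat_app[OF X char])
  note car = is_umod_carrier[OF X]
  have cf: "mat_app (rc X) (vec_fun x) = 0"
    using mat_app_vec_fun[of x "rc X"] car x cx by (auto simp: vec_fun_def fun_eq_iff)
  have F: "Qmod_hom X x = mat (rdim X) 16
      (\<lambda>(i, j). (words (mat_app (ra X)) (mat_app (rb X)) (vec_fun x) ! j) i)"
    unfolding Qmod_hom_def ..
  show ?thesis unfolding is_hom_def
    using intertwine_basis_rect_mat[OF car(1) Q_basis_wf(1) Q_basis_wf(4) _ F] a_words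
      intertwine_basis_rect_mat[OF car(2) Q_basis_wf(2) Q_basis_wf(5) _ F] b_words
      intertwine_basis_rect_mat[OF car(3) Q_basis_wf(3) Q_basis_wf(6) _ F] c_words
    by (simp add: cf Qmod_hom_def)
qed

lemma col_Qmod_hom: "x \<in> carrier_vec (rdim X) \<Longrightarrow> col (Qmod_hom X x) 0 = x"
  by (intro eq_vecI) (auto simp: Qmod_hom_def words_def vec_fun_def)

definition basis_fun :: "nat \<Rightarrow> nat \<Rightarrow> nat \<Rightarrow> 'k::field" where
  "basis_fun n j = (\<lambda>l. if l < n \<and> l = j then 1 else 0)"

lemma mat_app_basis_fun:
  assumes G: "G \<in> carrier_mat m n" and "i < m" "j < n"
  shows "mat_app G (basis_fun n j) i = G $$ (i, j)"
proof -
  have "mat_app G (basis_fun n j) i = (\<Sum>l\<in>{0..<n}. G $$ (i, l) * basis_fun n j l)"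
    using assms by (simp add: mat_app_def)
  also have "\<dots> = (\<Sum>l\<in>{0..<n}. if l = j then G $$ (i, j) else 0)"
    by (rule sum.cong) (auto simp: basis_fun_def)
  finally show ?thesis using assms by simp
qed

lemma mat_app_basis_rect_mat_basis_fun:
  assumes "l < n" "I ! l = [r]" "r < n"
  shows "mat_app (basis_rect_mat n n I) (basis_fun n l) = (basis_fun n r :: nat \<Rightarrow> 'k::field)"
proof
  fix i
  show "mat_app (basis_rect_mat n n I) (basis_fun n l) i = (basis_fun n r :: nat \<Rightarrow> 'k) i"
  proof (cases "i < n")
    case True
    then show ?thesis using assms mat_app_basis_fun[of "basis_rect_mat n n I" n n i l]
      by (simp add: basis_fun_def)
  qed (simp add: mat_app_def basis_fun_def)
qed

lemma words_Qmod:
  "j < 16 \<Longrightarrow> words (mat_app (basis_rect_mat 16 16 Qa)) (mat_app (basis_rect_mat 16 16 Qb)) (basis_fun 16 0) ! j =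
    (basis_fun 16 j :: nat \<Rightarrow> 'k::field)"
  by (drule less_16_cases)
    (elim disjE; simp add: words_def mat_app_basis_rect_mat_basis_fun Qa_def Qb_def)

lemma Qmod_hom_unique:
  assumes Y: "is_umod Y" and G: "is_hom Qmod Y G" and char: "CHAR('k::field) = 2"
  shows "G = Qmod_hom Y (col G 0 :: 'k vec)"
proof -
  let ?n = "rdim Y"
  have Gc: "G \<in> carrier_mat ?n 16" using is_hom_carrier[OF G] by simp
  note transport = is_hom_mat_app_commute[OF G is_umod_Qmod[OF char] Y]
  have col0: "vec_fun (col G 0) = mat_app G (basis_fun 16 0)"
    using Gc mat_app_basis_fun[OF Gc] by (auto simp: vec_fun_def mat_app_def fun_eq_iff)
  have words: "words (mat_app (ra Y)) (mat_app (rb Y)) (mat_app G (basis_fun 16 0)) =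
      map (mat_app G) (words (mat_app (ra Qmod)) (mat_app (rb Qmod)) (basis_fun 16 0))"
    by (simp add: words_def transport)
  show ?thesis
  proof (rule eq_matI)
    fix i j assume "i < dim_row (Qmod_hom Y (col G 0))" "j < dim_col (Qmod_hom Y (col G 0))"
    then have i: "i < ?n" and j: "j < 16" by (auto simp: Qmod_hom_def)
    have "Qmod_hom Y (col G 0) $$ (i, j) = mat_app G (basis_fun 16 j) i"
      using i j by (simp add: Qmod_hom_def col0 words words_Qmod)
    then show "G $$ (i, j) = Qmod_hom Y (col G 0) $$ (i, j)"
      using mat_app_basis_fun[OF Gc i j] by simp
  qed (use Gc in \<open>auto simp: Qmod_hom_def\<close>)
qed

lemma rc_kills_col0_hom_Qmod:
  assumes Y: "is_umod Y" and G: "is_hom Qmod Y G"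
  shows "rc Y *\<^sub>v col G 0 = 0\<^sub>v (rdim Y)"
proof -
  have Gc: "G \<in> carrier_mat (rdim Y) 16" using is_hom_carrier[OF G] by simp
  have "rc Y *\<^sub>v col G 0 = col (rc Y * G) 0" using is_umod_carrier[OF Y] Gc by simp
  also have "rc Y * G = G * basis_rect_mat 16 16 Qc" using G unfolding is_hom_def by simp
  also have "col \<dots> 0 = G *\<^sub>v col (basis_rect_mat 16 16 Qc) 0"
    using col_mult2[OF Gc basis_rect_mat_carrier, of 0] by simp
  also have "col (basis_rect_mat 16 16 Qc) 0 = 0\<^sub>v 16" by (rule eq_vecI) (auto simp: Qc_def)
  finally show ?thesis using mult_mat_zero_vec[OF Gc] by simp
qed

text \<open>Since \<open>c\<close> is idempotent, \<open>x + c x\<close> is a preimage of \<open>y\<close> killed by \<open>c\<close> whenever \<open>x\<close> is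
  any preimage of such a \<open>y\<close>.\<close>

lemma hom_surj_rc_kernel:
  assumes X: "is_umod X" and Y: "is_umod Y" and f: "is_hom X Y f" and surj: "hom_surj X Y f"
    and y: "y \<in> carrier_vec (rdim Y)" and cy: "rc Y *\<^sub>v y = 0\<^sub>v (rdim Y)"
  shows "\<exists>x \<in> carrier_vec (rdim X). rc X *\<^sub>v x = 0\<^sub>v (rdim X) \<and> f *\<^sub>v x = y"
proof -
  have fc: "f \<in> carrier_mat (rdim Y) (rdim X)" using f by (rule is_hom_carrier)
  note CX = is_umod_carrier(3)[OF X] and CY = is_umod_carrier(3)[OF Y]
  obtain x0 where x0: "x0 \<in> carrier_vec (rdim X)" and fx0: "f *\<^sub>v x0 = y"
    using surj y unfolding hom_surj_def by blast
  define x where "x = x0 + rc X *\<^sub>v x0"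
  have x: "x \<in> carrier_vec (rdim X)" using x0 CX unfolding x_def by simp
  have "rc X *\<^sub>v x = rc X *\<^sub>v x0 + rc X *\<^sub>v (rc X *\<^sub>v x0)"
    using CX x0 by (simp add: x_def mult_add_distrib_mat_vec)
  also have "\<dots> = rc X *\<^sub>v (rc X *\<^sub>v x0) + rc X *\<^sub>v x0"
    using CX x0 by (intro comm_add_vec[of _ "rdim X"]) auto
  also have "\<dots> = (rc X * rc X + rc X) *\<^sub>v x0"
    using add_mult_distrib_mat_vec[of "rc X * rc X" "rdim X" "rdim X" "rc X" x0] CX x0 by simp
  also have "rc X * rc X + rc X = 0\<^sub>m (rdim X) (rdim X)"
    using X unfolding is_umod_def Let_def by simp
  finally have cx: "rc X *\<^sub>v x = 0\<^sub>v (rdim X)"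
    using x0 by (simp add: zero_mult_mat_vec)
  have "f *\<^sub>v (rc X *\<^sub>v x0) = (f * rc X) *\<^sub>v x0"
    using fc CX x0 by simp
  also have "f * rc X = rc Y * f" using f unfolding is_hom_def by simp
  also have "(rc Y * f) *\<^sub>v x0 = rc Y *\<^sub>v y"
    using fc CY x0 fx0 by simp
  finally have "f *\<^sub>v (rc X *\<^sub>v x0) = 0\<^sub>v (rdim Y)" using cy by simp
  then have "f *\<^sub>v x = y"
    using fc CX x0 fx0 y by (simp add: x_def mult_add_distrib_mat_vec)
  then show ?thesis using x cx by blast
qed

lemma is_projective_Qmod:
  assumes char: "CHAR('k::field) = 2"
  shows "is_projective (Qmod :: 'k urep)"
  unfolding is_projective_def
proof (intro conjI allI impI)
  show "is_umod (Qmod :: 'k urep)" by (rule is_umod_Qmod[OF char])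
  fix X Y :: "'k urep" and f g
  assume "is_umod X \<and> is_umod Y \<and> is_hom X Y f \<and> hom_surj X Y f \<and> is_hom Qmod Y g"
  then have X: "is_umod X" and Y: "is_umod Y" and f: "is_hom X Y f" and surj: "hom_surj X Y f"
    and g: "is_hom Qmod Y g" by auto
  define y where "y = col g 0"
  have y: "y \<in> carrier_vec (rdim Y)"
    unfolding y_def by (rule col_carrier_vec[OF _ is_hom_carrier[OF g]]) simp
  have cy: "rc Y *\<^sub>v y = 0\<^sub>v (rdim Y)"
    unfolding y_def by (rule rc_kills_col0_hom_Qmod[OF Y g])
  obtain x where x: "x \<in> carrier_vec (rdim X)" and cx: "rc X *\<^sub>v x = 0\<^sub>v (rdim X)"
    and fx: "f *\<^sub>v x = y"
    using hom_surj_rc_kernel[OF X Y f surj y cy] by blast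
  define h where "h = Qmod_hom X x"
  have h: "is_hom Qmod X h" unfolding h_def by (rule is_hom_Qmod_hom[OF X char x cx])
  have fh: "is_hom Qmod Y (f * h)" by (rule is_hom_mult[OF is_umod_Qmod[OF char] X Y f h])
  have "f * h = Qmod_hom Y (col (f * h) 0)" by (rule Qmod_hom_unique[OF Y fh char])
  also have "col (f * h) 0 = y"
    using is_hom_carrier[OF f] is_hom_carrier[OF h] fx col_Qmod_hom[OF x] unfolding h_def by simp
  also have "Qmod_hom Y y = g" unfolding y_def by (rule Qmod_hom_unique[OF Y g char, symmetric])
  finally show "\<exists>h. is_hom Qmod X h \<and> f * h = g" using h by blast
qed

lemma is_projective_retract:
  assumes P: "is_projective P" and R: "is_umod R"
    and s: "is_hom R P s" and t: "is_hom P R t" and ts: "t * s = 1\<^sub>m (rdim R)"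
  shows "is_projective R"
  unfolding is_projective_def
proof (intro conjI allI impI)
  show "is_umod R" by (rule R)
  fix X Y f g
  assume "is_umod X \<and> is_umod Y \<and> is_hom X Y f \<and> hom_surj X Y f \<and> is_hom R Y g"
  then have X: "is_umod X" and Y: "is_umod Y" and f: "is_hom X Y f" and surj: "hom_surj X Y f"
    and g: "is_hom R Y g" by auto
  have P': "is_umod P" using P unfolding is_projective_def by simp
  have gt: "is_hom P Y (g * t)" by (rule is_hom_mult[OF P' R Y g t])
  obtain h where h: "is_hom P X h" and fh: "f * h = g * t"
    using is_projectiveD[OF P X Y f surj gt] by blast
  have fc: "f \<in> carrier_mat (rdim Y) (rdim X)" and hc: "h \<in> carrier_mat (rdim X) (rdim P)"
    and sc: "s \<in> carrier_mat (rdim P) (rdim R)" and tc: "t \<in> carrier_mat (rdim R) (rdim P)"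
    and gc: "g \<in> carrier_mat (rdim Y) (rdim R)"
    using f h s t g by (auto dest: is_hom_carrier)
  have "f * (h * s) = (f * h) * s" using fc hc sc by (rule assoc_mult_mat[symmetric])
  also have "\<dots> = g * (t * s)" using gc tc sc by (simp add: fh)
  also have "\<dots> = g" using gc ts by simp
  finally show "\<exists>h. is_hom R X h \<and> f * h = g" using is_hom_mult[OF R P' X h s] by blast
qed

section \<open>Injective and surjective matrices\<close>

lemma injective_pivot_fun_covers_columns:
  fixes C :: "'k::field mat"
  assumes C: "C \<in> carrier_mat m n" and piv: "pivot_fun C f n"
    and inj: "\<And>x. x \<in> carrier_vec n \<Longrightarrow> C *\<^sub>v x = 0\<^sub>v m \<Longrightarrow> x = 0\<^sub>v n"
    and j: "j < n"
  shows "\<exists>i<m. f i = j"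
proof -
  have ref: "row_echelon_form C" using C piv unfolding row_echelon_form_def by auto
  have "snd ` set (pivot_positions C) = {0..<n}"
  proof (rule ccontr)
    assume "snd ` set (pivot_positions C) \<noteq> {0..<n}"
    note v = find_base_vector[OF ref C this]
    then show False using inj[OF v(1)] by simp
  qed
  then have "j \<in> snd ` set (pivot_positions C)" using j by simp
  then show ?thesis unfolding pivot_positions(1)[OF C piv] by auto
qed

text \<open>Reduce \<open>A\<close> to reduced row echelon form \<open>P A\<close>. Injectivity forces a pivot in every
  column, and the rows of \<open>P\<close> belonging to the pivots form a left inverse.\<close>

lemma injective_mat_left_inverse:
  fixes A :: "'k::field mat"
  assumes A: "A \<in> carrier_mat m n"
    and inj: "\<And>x. x \<in> carrier_vec n \<Longrightarrow> A *\<^sub>v x = 0\<^sub>v m \<Longrightarrow> x = 0\<^sub>v n"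
  shows "\<exists>G. G \<in> carrier_mat n m \<and> G * A = 1\<^sub>m n"
proof -
  define C where "C = gauss_jordan_single A"
  note gj = gauss_jordan_single[OF A C_def[symmetric]]
  obtain P where CPA: "C = P * A" and P: "P \<in> carrier_mat m m" using gj(4) by blast
  have C: "C \<in> carrier_mat m n" by (rule gj(2))
  obtain f where piv: "pivot_fun C f n"
    using gj(3) C unfolding row_echelon_form_def by auto
  have injC: "x = 0\<^sub>v n" if "x \<in> carrier_vec n" "C *\<^sub>v x = 0\<^sub>v m" for x
    using inj[OF that(1)] gj(1)[OF that(1)] that(2) by simp
  have "\<exists>i<m. f i = j" if "j < n" for j
    by (rule injective_pivot_fun_covers_columns[OF C piv injC that])
  then obtain r where r: "\<And>j. j < n \<Longrightarrow> r j < m \<and> f (r j) = j" by metis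
  note pivD = pivot_funD[OF carrier_matD(1)[OF C] piv]
  define G where "G = mat n m (\<lambda>(j, l). P $$ (r j, l))"
  have "G * A = 1\<^sub>m n"
  proof (rule eq_matI)
    fix j j' assume "j < dim_row (1\<^sub>m n :: 'k mat)" "j' < dim_col (1\<^sub>m n :: 'k mat)"
    then have j: "j < n" and j': "j' < n" by auto
    have "(G * A) $$ (j, j') = C $$ (r j, f (r j'))"
      using A P j j' r[OF j] r[OF j'] by (simp add: CPA G_def scalar_prod_def)
    also have "\<dots> = (if j = j' then 1 else 0)"
    proof (cases "j = j'")
      case True
      then show ?thesis using pivD(4)[of "r j"] r[OF j] j by simp
    next
      case False
      then have "r j \<noteq> r j'" using r[OF j] r[OF j'] by metis
      then show ?thesis using pivD(5)[of "r j'" "r j"] r[OF j] r[OF j'] j' False by simp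
    qed
    finally show "(G * A) $$ (j, j') = (1\<^sub>m n :: 'k mat) $$ (j, j')" using j j' by simp
  qed (use A in \<open>auto simp: G_def\<close>)
  moreover have "G \<in> carrier_mat n m" by (simp add: G_def)
  ultimately show ?thesis by blast
qed

lemma injective_square_mat_invertible:
  fixes A :: "'k::field mat"
  assumes A: "A \<in> carrier_mat n n"
    and inj: "\<And>x. x \<in> carrier_vec n \<Longrightarrow> A *\<^sub>v x = 0\<^sub>v n \<Longrightarrow> x = 0\<^sub>v n"
  shows "\<exists>T. T \<in> carrier_mat n n \<and> A * T = 1\<^sub>m n \<and> T * A = 1\<^sub>m n"
proof -
  obtain G where G: "G \<in> carrier_mat n n" and GA: "G * A = 1\<^sub>m n"
    using injective_mat_left_inverse[OF A inj] by blast
  show ?thesis using G GA mat_mult_left_right_inverse[OF G A GA] by blast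
qed

lemma surjective_square_mat_invertible:
  fixes A :: "'k::field mat"
  assumes A: "A \<in> carrier_mat n n"
    and surj: "\<And>y. y \<in> carrier_vec n \<Longrightarrow> \<exists>x \<in> carrier_vec n. A *\<^sub>v x = y"
  shows "\<exists>T. T \<in> carrier_mat n n \<and> A * T = 1\<^sub>m n \<and> T * A = 1\<^sub>m n"
proof -
  have "\<forall>j. \<exists>x. j < n \<longrightarrow> x \<in> carrier_vec n \<and> A *\<^sub>v x = unit_vec n j"
    using surj by (metis unit_vec_carrier)
  then obtain pre where pre: "\<And>j. j < n \<Longrightarrow> pre j \<in> carrier_vec n \<and> A *\<^sub>v pre j = unit_vec n j"
    by metis
  define T where "T = mat n n (\<lambda>(i, j). pre j $ i)"
  have T: "T \<in> carrier_mat n n" unfolding T_def by simp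
  have colT: "col T j = pre j" if "j < n" for j
    using pre[OF that] that unfolding T_def by (intro eq_vecI) auto
  have AT: "A * T = 1\<^sub>m n"
  proof (rule eq_matI)
    fix i j assume "i < dim_row (1\<^sub>m n :: 'k mat)" "j < dim_col (1\<^sub>m n :: 'k mat)"
    then have i: "i < n" and j: "j < n" by auto
    have "(A * T) $$ (i, j) = (A *\<^sub>v col T j) $ i" using A T i j by simp
    also have "\<dots> = unit_vec n j $ i" using colT[OF j] pre[OF j] by simp
    finally show "(A * T) $$ (i, j) = (1\<^sub>m n :: 'k mat) $$ (i, j)" using i j by simp
  qed (use A T in auto)
  show ?thesis using T AT mat_mult_left_right_inverse[OF A T AT] by blast
qed

lemma transpose_surjective_if_injective:
  fixes A :: "'k::field mat"
  assumes A: "A \<in> carrier_mat m n"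
    and inj: "\<And>x. x \<in> carrier_vec n \<Longrightarrow> A *\<^sub>v x = 0\<^sub>v m \<Longrightarrow> x = 0\<^sub>v n"
    and y: "y \<in> carrier_vec n"
  shows "\<exists>z \<in> carrier_vec m. transpose_mat A *\<^sub>v z = y"
proof -
  obtain G where G: "G \<in> carrier_mat n m" and GA: "G * A = 1\<^sub>m n"
    using injective_mat_left_inverse[OF A inj] by blast
  have "transpose_mat A *\<^sub>v (transpose_mat G *\<^sub>v y) = transpose_mat (G * A) *\<^sub>v y"
    using A G y by (simp add: transpose_mult[OF G A])
  then show ?thesis using G GA y by (intro bexI[of _ "transpose_mat G *\<^sub>v y"]) auto
qed

section \<open>Duality\<close>

text \<open>The defining relations are invariant under reversing all products, so transposing the
  action matrices of a module gives a module: the dual module, since the antipode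
  \<open>x \<mapsto> -x\<close> of u(m) is the identity on generators in characteristic 2.\<close>

definition dual_urep :: "'k::field urep \<Rightarrow> 'k urep" where
  "dual_urep V = \<lparr>rdim = rdim V, ra = transpose_mat (ra V), rb = transpose_mat (rb V),
     rc = transpose_mat (rc V)\<rparr>"

lemma dual_urep_simps [simp]:
  "rdim (dual_urep V) = rdim V" "ra (dual_urep V) = transpose_mat (ra V)"
  "rb (dual_urep V) = transpose_mat (rb V)" "rc (dual_urep V) = transpose_mat (rc V)"
  unfolding dual_urep_def by simp_all

lemma transpose_anticommutator:
  fixes X Y :: "'k::comm_ring mat"
  assumes "X \<in> carrier_mat n n" "Y \<in> carrier_mat n n"
  shows "transpose_mat X * transpose_mat Y + transpose_mat Y * transpose_mat X =
    transpose_mat (X * Y + Y * X)"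
proof -
  have "transpose_mat (X * Y + Y * X) = transpose_mat (X * Y) + transpose_mat (Y * X)"
    using assms by (intro transpose_add[of _ n n]) auto
  also have "\<dots> = transpose_mat Y * transpose_mat X + transpose_mat X * transpose_mat Y"
    using transpose_mult[of X n n Y n] transpose_mult[of Y n n X n] assms by simp
  also have "\<dots> = transpose_mat X * transpose_mat Y + transpose_mat Y * transpose_mat X"
    using assms by (intro comm_add_mat[of _ n n]) auto
  finally show ?thesis by simp
qed

lemma transpose_pow_mat_4:
  assumes A: "(A :: 'k::field mat) \<in> carrier_mat n n"
  shows "transpose_mat (A ^\<^sub>m 4) = transpose_mat A ^\<^sub>m 4"
proof -
  have "transpose_mat (A * A * A * A) = transpose_mat A * transpose_mat A * transpose_mat A * transpose_mat A"
    using A by (simp add: transpose_mult[of _ n n _ n] assoc_mult_mat[of _ n n _ n _ n])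
  then show ?thesis using A by (simp add: pow_mat_4)
qed

lemma is_umod_dual_urep:
  assumes V: "is_umod (V :: 'k::field urep)"
  shows "is_umod (dual_urep V)"
proof -
  let ?n = "rdim V"
  from V have A: "ra V \<in> carrier_mat ?n ?n" and B: "rb V \<in> carrier_mat ?n ?n"
    and C: "rc V \<in> carrier_mat ?n ?n"
    and rels: "ra V * rb V + rb V * ra V = rc V" "ra V * rc V + rc V * ra V = ra V"
      "rb V * rc V + rc V * rb V = rb V" "ra V ^\<^sub>m 4 = 0\<^sub>m ?n ?n" "rb V ^\<^sub>m 4 = 0\<^sub>m ?n ?n"
      "rc V * rc V + rc V = 0\<^sub>m ?n ?n"
    unfolding is_umod_def Let_def by auto
  have cc: "transpose_mat (rc V) * transpose_mat (rc V) + transpose_mat (rc V) =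
      transpose_mat (rc V * rc V + rc V)"
    using C by (simp add: transpose_mult[OF C C] transpose_add[of "rc V * rc V" ?n ?n])
  show ?thesis
    unfolding is_umod_def Let_def dual_urep_simps
  proof (intro conjI)
    show "transpose_mat (ra V) * transpose_mat (rb V) + transpose_mat (rb V) * transpose_mat (ra V) =
        transpose_mat (rc V)"
      using transpose_anticommutator[OF A B] rels(1) by simp
    show "transpose_mat (ra V) * transpose_mat (rc V) + transpose_mat (rc V) * transpose_mat (ra V) =
        transpose_mat (ra V)"
      using transpose_anticommutator[OF A C] rels(2) by simp
    show "transpose_mat (rb V) * transpose_mat (rc V) + transpose_mat (rc V) * transpose_mat (rb V) =
        transpose_mat (rb V)"
      using transpose_anticommutator[OF B C] rels(3) by simp
    show "transpose_mat (ra V) ^\<^sub>m 4 = 0\<^sub>m ?n ?n"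
      using transpose_pow_mat_4[OF A] rels(4) by simp
    show "transpose_mat (rb V) ^\<^sub>m 4 = 0\<^sub>m ?n ?n"
      using transpose_pow_mat_4[OF B] rels(5) by simp
    show "transpose_mat (rc V) * transpose_mat (rc V) + transpose_mat (rc V) = 0\<^sub>m ?n ?n"
      using cc rels(6) by simp
  qed (use A B C in simp_all)
qed

lemma dual_urep_dual_urep [simp]: "dual_urep (dual_urep V) = V"
  by (cases V) (simp add: dual_urep_def)

lemma is_hom_dual_urep:
  assumes F: "is_hom V W F" and V: "is_umod V" and W: "is_umod W"
  shows "is_hom (dual_urep W) (dual_urep V) (transpose_mat F)"
proof -
  have Fc: "F \<in> carrier_mat (rdim W) (rdim V)" using F by (rule is_hom_carrier)
  have comm: "transpose_mat F * transpose_mat XW = transpose_mat XV * transpose_mat F"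
    if "XV \<in> carrier_mat (rdim V) (rdim V)" "XW \<in> carrier_mat (rdim W) (rdim W)"
      "F * XV = XW * F" for XV XW
    using that transpose_mult[OF _ Fc] transpose_mult[OF Fc] by metis
  show ?thesis
    using Fc F comm is_umod_carrier[OF V] is_umod_carrier[OF W] unfolding is_hom_def by auto
qed

lemma is_injectiveI_dual_projective:
  assumes I: "is_umod (I :: 'k::field urep)" and proj: "is_projective (dual_urep I)"
  shows "is_injective I"
  unfolding is_injective_def
proof (intro conjI allI impI)
  show "is_umod I" by (rule I)
  fix X Y f g
  assume "is_umod X \<and> is_umod Y \<and> is_hom X Y f \<and> hom_inj X Y f \<and> is_hom X I g"
  then have X: "is_umod X" and Y: "is_umod Y" and f: "is_hom X Y f" and inj: "hom_inj X Y f"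
    and g: "is_hom X I g" by auto
  have fc: "f \<in> carrier_mat (rdim Y) (rdim X)" using f by (rule is_hom_carrier)
  have surj: "hom_surj (dual_urep Y) (dual_urep X) (transpose_mat f)"
    unfolding hom_surj_def dual_urep_simps
    using transpose_surjective_if_injective[OF fc] inj unfolding hom_inj_def by blast
  obtain h where h: "is_hom (dual_urep I) (dual_urep Y) h" and fh: "transpose_mat f * h = transpose_mat g"
    using is_projectiveD[OF proj is_umod_dual_urep[OF Y] is_umod_dual_urep[OF X]
        is_hom_dual_urep[OF f X Y] surj is_hom_dual_urep[OF g X I]] by blast
  have hc: "h \<in> carrier_mat (rdim Y) (rdim I)" using is_hom_carrier[OF h] by simp
  have "is_hom Y I (transpose_mat h)"
    using is_hom_dual_urep[OF h is_umod_dual_urep[OF I] is_umod_dual_urep[OF Y]] by simp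
  moreover have "transpose_mat h * f = g"
    using arg_cong[OF fh, of transpose_mat] transpose_mult[OF _ hc, of "transpose_mat f"] fc by simp
  ultimately show "\<exists>h. is_hom Y I h \<and> h * f = g" by blast
qed

section \<open>Uniqueness of projective covers and injective envelopes\<close>

lemma mult_mat_vec_intertwine:
  assumes F: "F \<in> carrier_mat n m" and XU: "XU \<in> carrier_mat m m" and XV: "XV \<in> carrier_mat n n"
    and comm: "F * XU = XV * F" and x: "x \<in> carrier_vec m"
  shows "XV *\<^sub>v (F *\<^sub>v x) = F *\<^sub>v (XU *\<^sub>v x)"
proof -
  have "XV *\<^sub>v (F *\<^sub>v x) = (XV * F) *\<^sub>v x" using XV F x by simp
  also have "\<dots> = (F * XU) *\<^sub>v x" by (simp only: comm)
  also have "\<dots> = F *\<^sub>v (XU *\<^sub>v x)" using F XU x by simp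
  finally show ?thesis .
qed

lemma is_submod_hom_image:
  assumes F: "is_hom U V F" and U: "is_umod U" and V: "is_umod V"
  shows "is_submod {F *\<^sub>v x | x. x \<in> carrier_vec (rdim U)} V"
proof -
  let ?L = "{F *\<^sub>v x | x. x \<in> carrier_vec (rdim U)}"
  have Fc: "F \<in> carrier_mat (rdim V) (rdim U)" using F by (rule is_hom_carrier)
  have image: "F *\<^sub>v x \<in> ?L" if "x \<in> carrier_vec (rdim U)" for x
    using that by blast
  have closed: "XV *\<^sub>v y \<in> ?L"
    if XU: "XU \<in> carrier_mat (rdim U) (rdim U)" and XV: "XV \<in> carrier_mat (rdim V) (rdim V)"
      and comm: "F * XU = XV * F" and y: "y \<in> ?L" for XU XV y
  proof -
    obtain x where x: "x \<in> carrier_vec (rdim U)" and yx: "y = F *\<^sub>v x" using y by blast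
    then have "XV *\<^sub>v y = F *\<^sub>v (XU *\<^sub>v x)" using mult_mat_vec_intertwine[OF Fc XU XV comm x] by simp
    then show ?thesis using image[of "XU *\<^sub>v x"] XU x by simp
  qed
  show ?thesis unfolding is_submod_def
  proof (intro conjI ballI allI)
    show "?L \<subseteq> carrier_vec (rdim V)" using Fc by auto
    show "0\<^sub>v (rdim V) \<in> ?L"
      using image[of "0\<^sub>v (rdim U)"] mult_mat_zero_vec[OF Fc] by simp
    fix x y assume "x \<in> ?L" "y \<in> ?L"
    then obtain x' y' where x': "x = F *\<^sub>v x'" "x' \<in> carrier_vec (rdim U)"
      and y': "y = F *\<^sub>v y'" "y' \<in> carrier_vec (rdim U)" by blast
    then have "x + y = F *\<^sub>v (x' + y')" using Fc by (simp add: mult_add_distrib_mat_vec)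
    then show "x + y \<in> ?L" using image[of "x' + y'"] x' y' by simp
  next
    fix s x assume "x \<in> ?L"
    then obtain x' where x': "x = F *\<^sub>v x'" "x' \<in> carrier_vec (rdim U)" by blast
    then have "s \<cdot>\<^sub>v x = F *\<^sub>v (s \<cdot>\<^sub>v x')" using Fc by (simp add: mult_mat_vec)
    then show "s \<cdot>\<^sub>v x \<in> ?L" using image[of "s \<cdot>\<^sub>v x'"] x' by simp
  next
    fix x assume x: "x \<in> ?L"
    note carriers = is_umod_carrier[OF U] is_umod_carrier[OF V]
    have "F * ra U = ra V * F" "F * rb U = rb V * F" "F * rc U = rc V * F"
      using F unfolding is_hom_def by simp_all
    then show "ra V *\<^sub>v x \<in> ?L" "rb V *\<^sub>v x \<in> ?L" "rc V *\<^sub>v x \<in> ?L"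
      using closed[OF carriers(1,4) _ x] closed[OF carriers(2,5) _ x] closed[OF carriers(3,6) _ x]
      by simp_all
  qed
qed

lemma is_submod_hom_kernel:
  assumes F: "is_hom V W F" and V: "is_umod V" and W: "is_umod W"
  shows "is_submod {x \<in> carrier_vec (rdim V). F *\<^sub>v x = 0\<^sub>v (rdim W)} V"
proof -
  let ?K = "{x \<in> carrier_vec (rdim V). F *\<^sub>v x = 0\<^sub>v (rdim W)}"
  have Fc: "F \<in> carrier_mat (rdim W) (rdim V)" using F by (rule is_hom_carrier)
  have closed: "XV *\<^sub>v x \<in> ?K"
    if XV: "XV \<in> carrier_mat (rdim V) (rdim V)" and XW: "XW \<in> carrier_mat (rdim W) (rdim W)"
      and comm: "F * XV = XW * F" and x: "x \<in> ?K" for XV XW x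
  proof -
    have xc: "x \<in> carrier_vec (rdim V)" and Fx: "F *\<^sub>v x = 0\<^sub>v (rdim W)" using x by auto
    have "F *\<^sub>v (XV *\<^sub>v x) = XW *\<^sub>v (F *\<^sub>v x)"
      using mult_mat_vec_intertwine[OF Fc XV XW comm xc] by simp
    then show ?thesis using XV XW xc Fx by (simp add: mult_mat_zero_vec)
  qed
  show ?thesis unfolding is_submod_def
  proof (intro conjI ballI allI)
    show "?K \<subseteq> carrier_vec (rdim V)" by auto
    show "0\<^sub>v (rdim V) \<in> ?K" using Fc by (simp add: mult_mat_zero_vec)
    fix x y assume "x \<in> ?K" "y \<in> ?K"
    then show "x + y \<in> ?K" using Fc by (auto simp: mult_add_distrib_mat_vec)
  next
    fix s x assume "x \<in> ?K"
    then show "s \<cdot>\<^sub>v x \<in> ?K" using Fc by (auto simp: mult_mat_vec)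
  next
    fix x assume x: "x \<in> ?K"
    note carriers = is_umod_carrier[OF V] is_umod_carrier[OF W]
    have "F * ra V = ra W * F" "F * rb V = rb W * F" "F * rc V = rc W * F"
      using F unfolding is_hom_def by simp_all
    then show "ra V *\<^sub>v x \<in> ?K" "rb V *\<^sub>v x \<in> ?K" "rc V *\<^sub>v x \<in> ?K"
      using closed[OF carriers(1,4) _ x] closed[OF carriers(2,5) _ x] closed[OF carriers(3,6) _ x]
      by simp_all
  qed
qed

lemma umod_iso_if_composites_invertible:
  assumes h: "is_hom P W h" and k: "is_hom W P k" and P: "is_umod P" and W: "is_umod W"
    and u: "u \<in> carrier_mat (rdim W) (rdim W)" "h * k * u = 1\<^sub>m (rdim W)" "u * (h * k) = 1\<^sub>m (rdim W)"
    and v: "v \<in> carrier_mat (rdim P) (rdim P)" "k * h * v = 1\<^sub>m (rdim P)" "v * (k * h) = 1\<^sub>m (rdim P)"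
  shows "umod_iso P W"
proof -
  have hc: "h \<in> carrier_mat (rdim W) (rdim P)" and kc: "k \<in> carrier_mat (rdim P) (rdim W)"
    using h k by (auto dest: is_hom_carrier)
  have "is_hom W W u"
    using is_hom_inverse[OF is_hom_mult[OF W P W h k] u(1) W u(2,3)] .
  then have ku: "is_hom W P (k * u)" by (rule is_hom_mult[OF W W P k])
  have hku: "h * (k * u) = 1\<^sub>m (rdim W)" using hc kc u by simp
  have kuc: "k * u \<in> carrier_mat (rdim P) (rdim W)" using kc u(1) by simp
  txt \<open>\<open>k u\<close> is a right inverse of \<open>h\<close>, and \<open>v k\<close> a left inverse, so they agree.\<close>
  have vkh: "v * k * h = 1\<^sub>m (rdim P)" using assoc_mult_mat[OF v(1) kc hc] v(3) by simp
  have "v * k = v * k * (h * (k * u))" using hku v(1) kc by simp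
  also have "\<dots> = v * k * h * (k * u)"
    by (rule assoc_mult_mat[symmetric]) (use v(1) kc hc kuc in auto)
  also have "\<dots> = k * u" using vkh left_mult_one_mat[OF kuc] by simp
  finally have "k * u * h = 1\<^sub>m (rdim P)" using vkh by simp
  then show ?thesis unfolding umod_iso_def using h ku hku by blast
qed

lemma projective_cover_endo_invertible:
  assumes cover: "is_projective_cover P p V" and S: "is_hom P P S" and pS: "p * S = p"
  shows "\<exists>T. T \<in> carrier_mat (rdim P) (rdim P) \<and> S * T = 1\<^sub>m (rdim P) \<and> T * S = 1\<^sub>m (rdim P)"
proof -
  let ?n = "rdim P"
  let ?L = "{S *\<^sub>v x | x. x \<in> carrier_vec ?n}"
  have P: "is_umod P" and pc: "p \<in> carrier_mat (rdim V) ?n"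
    using cover unfolding is_projective_cover_def is_projective_def is_hom_def by simp_all
  have superfluous: "\<forall>L. is_submod L P \<and>
      (\<forall>x \<in> carrier_vec ?n. \<exists>l\<in>L. \<exists>k \<in> carrier_vec ?n. p *\<^sub>v k = 0\<^sub>v (rdim V) \<and> x = l + k) \<longrightarrow>
      L = carrier_vec ?n"
    using cover unfolding is_projective_cover_def by (elim conjE) assumption
  have Sc: "S \<in> carrier_mat ?n ?n" using S by (rule is_hom_carrier)
  txt \<open>Every \<open>x\<close> is \<open>S x + (x - S x)\<close> with \<open>x - S x\<close> in the kernel of \<open>p\<close>.\<close>
  have "\<forall>x \<in> carrier_vec ?n. \<exists>l\<in>?L. \<exists>k \<in> carrier_vec ?n. p *\<^sub>v k = 0\<^sub>v (rdim V) \<and> x = l + k"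
  proof
    fix x :: "'a vec" assume x: "x \<in> carrier_vec ?n"
    have Sx: "S *\<^sub>v x \<in> carrier_vec ?n" using Sc x by simp
    have "p *\<^sub>v (x - S *\<^sub>v x) = p *\<^sub>v x - (p * S) *\<^sub>v x"
      using pc Sc x by (simp add: mult_minus_distrib_mat_vec)
    then have "p *\<^sub>v (x - S *\<^sub>v x) = 0\<^sub>v (rdim V)" using pS pc x by simp
    moreover have "x = S *\<^sub>v x + (x - S *\<^sub>v x)" using x Sx Sc by (intro eq_vecI) auto
    ultimately show "\<exists>l\<in>?L. \<exists>k \<in> carrier_vec ?n. p *\<^sub>v k = 0\<^sub>v (rdim V) \<and> x = l + k"
      using x Sx by (intro bexI[of _ "S *\<^sub>v x"] bexI[of _ "x - S *\<^sub>v x"]) auto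
  qed
  then have "?L = carrier_vec ?n" using superfluous is_submod_hom_image[OF S P P] by blast
  then have "\<exists>x \<in> carrier_vec ?n. S *\<^sub>v x = y" if "y \<in> carrier_vec ?n" for y
  proof -
    have "y \<in> ?L" using that \<open>?L = carrier_vec ?n\<close> by simp
    then show ?thesis by blast
  qed
  then show ?thesis by (rule surjective_square_mat_invertible[OF Sc])
qed

lemma projective_cover_unique:
  assumes cP: "is_projective_cover P p V" and cQ: "is_projective_cover Q q V"
  shows "umod_iso P Q"
proof -
  have P: "is_projective P" "is_umod P" and Q: "is_projective Q" "is_umod Q" and V: "is_umod V"
    and p: "is_hom P V p" "hom_surj P V p" and q: "is_hom Q V q" "hom_surj Q V q"
    using cP cQ unfolding is_projective_cover_def is_projective_def by auto
  obtain h where h: "is_hom P Q h" and qh: "q * h = p"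
    using is_projectiveD[OF P(1) Q(2) V q p(1)] by blast
  obtain k where k: "is_hom Q P k" and pk: "p * k = q"
    using is_projectiveD[OF Q(1) P(2) V p q(1)] by blast
  have hc: "h \<in> carrier_mat (rdim Q) (rdim P)" and kc: "k \<in> carrier_mat (rdim P) (rdim Q)"
    and pc: "p \<in> carrier_mat (rdim V) (rdim P)" and qc: "q \<in> carrier_mat (rdim V) (rdim Q)"
    using h k p q by (auto dest: is_hom_carrier)
  have "q * (h * k) = q" using assoc_mult_mat[OF qc hc kc] qh pk by simp
  then obtain u where "u \<in> carrier_mat (rdim Q) (rdim Q)" "h * k * u = 1\<^sub>m (rdim Q)" "u * (h * k) = 1\<^sub>m (rdim Q)"
    using projective_cover_endo_invertible[OF cQ is_hom_mult[OF Q(2) P(2) Q(2) h k]] by blast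
  moreover have "p * (k * h) = p" using assoc_mult_mat[OF pc kc hc] qh pk by simp
  then obtain v where "v \<in> carrier_mat (rdim P) (rdim P)" "k * h * v = 1\<^sub>m (rdim P)" "v * (k * h) = 1\<^sub>m (rdim P)"
    using projective_cover_endo_invertible[OF cP is_hom_mult[OF P(2) Q(2) P(2) k h]] by blast
  ultimately show ?thesis by (rule umod_iso_if_composites_invertible[OF h k P(2) Q(2)])
qed

lemma injective_envelope_endo_invertible:
  assumes env: "is_injective_envelope I i V" and S: "is_hom I I S" and Si: "S * i = i"
  shows "\<exists>T. T \<in> carrier_mat (rdim I) (rdim I) \<and> S * T = 1\<^sub>m (rdim I) \<and> T * S = 1\<^sub>m (rdim I)"
proof -
  let ?n = "rdim I"
  let ?K = "{x \<in> carrier_vec ?n. S *\<^sub>v x = 0\<^sub>v ?n}"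
  have I: "is_umod I" and ic: "i \<in> carrier_mat ?n (rdim V)"
    using env unfolding is_injective_envelope_def is_injective_def is_hom_def by simp_all
  have essential: "\<forall>L. is_submod L I \<and> L \<noteq> {0\<^sub>v ?n} \<longrightarrow>
      (\<exists>x \<in> carrier_vec (rdim V). i *\<^sub>v x \<in> L \<and> i *\<^sub>v x \<noteq> 0\<^sub>v ?n)"
    using env unfolding is_injective_envelope_def by (elim conjE) assumption
  have Sc: "S \<in> carrier_mat ?n ?n" using S by (rule is_hom_carrier)
  txt \<open>\<open>S\<close> fixes the image of \<open>i\<close>, so its kernel meets that image trivially.\<close>
  have "?K = {0\<^sub>v ?n}"
  proof (rule ccontr)
    assume "?K \<noteq> {0\<^sub>v ?n}"
    then obtain x where x: "x \<in> carrier_vec (rdim V)" "i *\<^sub>v x \<in> ?K" "i *\<^sub>v x \<noteq> 0\<^sub>v ?n"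
      using essential is_submod_hom_kernel[OF S I I] by blast
    have "S *\<^sub>v (i *\<^sub>v x) = (S * i) *\<^sub>v x" using Sc ic x(1) by simp
    then have "S *\<^sub>v (i *\<^sub>v x) = i *\<^sub>v x" by (simp only: Si)
    then show False using x by simp
  qed
  then have "x = 0\<^sub>v ?n" if "x \<in> carrier_vec ?n" "S *\<^sub>v x = 0\<^sub>v ?n" for x
    using that by blast
  then show ?thesis by (rule injective_square_mat_invertible[OF Sc])
qed

lemma injective_envelope_unique:
  assumes eI: "is_injective_envelope I i V" and eJ: "is_injective_envelope J j V"
  shows "umod_iso I J"
proof -
  have I: "is_injective I" "is_umod I" and J: "is_injective J" "is_umod J" and V: "is_umod V"
    and i: "is_hom V I i" "hom_inj V I i" and j: "is_hom V J j" "hom_inj V J j"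
    using eI eJ unfolding is_injective_envelope_def is_injective_def by auto
  obtain h where h: "is_hom J I h" and hj: "h * j = i"
    using is_injectiveD[OF I(1) V J(2) j i(1)] by blast
  obtain k where k: "is_hom I J k" and ki: "k * i = j"
    using is_injectiveD[OF J(1) V I(2) i j(1)] by blast
  have hc: "h \<in> carrier_mat (rdim I) (rdim J)" and kc: "k \<in> carrier_mat (rdim J) (rdim I)"
    and ic: "i \<in> carrier_mat (rdim I) (rdim V)" and jc: "j \<in> carrier_mat (rdim J) (rdim V)"
    using h k i j by (auto dest: is_hom_carrier)
  have "k * h * j = j" using assoc_mult_mat[OF kc hc jc] hj ki by simp
  then obtain u where "u \<in> carrier_mat (rdim J) (rdim J)" "k * h * u = 1\<^sub>m (rdim J)" "u * (k * h) = 1\<^sub>m (rdim J)"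
    using injective_envelope_endo_invertible[OF eJ is_hom_mult[OF J(2) I(2) J(2) k h]] by blast
  moreover have "h * k * i = i" using assoc_mult_mat[OF hc kc ic] hj ki by simp
  then obtain v where "v \<in> carrier_mat (rdim I) (rdim I)" "h * k * v = 1\<^sub>m (rdim I)" "v * (h * k) = 1\<^sub>m (rdim I)"
    using injective_envelope_endo_invertible[OF eI is_hom_mult[OF I(2) J(2) I(2) h k]] by blast
  ultimately show ?thesis by (rule umod_iso_if_composites_invertible[OF k h I(2) J(2)])
qed

definition Ma :: "nat list list" where "Ma = [[1], [2], [3], [], [5], [6], [7], []]"
definition Mb :: "nat list list" where "Mb = [[], [0], [1], [], [2], [3], [5], [6]]"
definition Mc :: "nat list list" where "Mc = [[0], [], [2], [], [], [5], [], [7]]"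
definition Na :: "nat list list" where "Na = [[1], [2], [3], [], [5], [6], [7], []]"
definition Nb :: "nat list list" where "Nb = [[], [], [1], [2], [0], [1, 4], [2, 5], [3]]"
definition Nc :: "nat list list" where "Nc = [[], [1], [], [3], [4], [], [6], []]"
definition V1a :: "nat list list" where "V1a = [[1], [2], []]"
definition V1b :: "nat list list" where "V1b = [[], [0], [1]]"
definition V1c :: "nat list list" where "V1c = [[0], [], [2]]"

lemma M_simps [simp]:
  "rdim M = 8" "ra M = basis_rect_mat 8 8 Ma" "rb M = basis_rect_mat 8 8 Mb" "rc M = basis_rect_mat 8 8 Mc"
  by (simp_all add: M_def basis_mat_eq_rect Ma_def Mb_def Mc_def)

lemma N_simps [simp]:
  "rdim N = 8" "ra N = basis_rect_mat 8 8 Na" "rb N = basis_rect_mat 8 8 Nb" "rc N = basis_rect_mat 8 8 Nc"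
  by (simp_all add: N_def basis_mat_eq_rect Na_def Nb_def Nc_def)

lemma V1_simps [simp]:
  "rdim V1 = 3" "ra V1 = basis_rect_mat 3 3 V1a" "rb V1 = basis_rect_mat 3 3 V1b"
  "rc V1 = basis_rect_mat 3 3 V1c"
  by (simp_all add: V1_def basis_mat_eq_rect V1a_def V1b_def V1c_def)

lemma V0_simps [simp]:
  "rdim V0 = 1" "ra V0 = basis_rect_mat 1 1 [[]]" "rb V0 = basis_rect_mat 1 1 [[]]"
  "rc V0 = basis_rect_mat 1 1 [[]]"
  by (simp_all add: V0_def zero_mat_eq_basis[of 1 1, simplified])

definition Q_retract_check ::
    "nat \<Rightarrow> nat list list \<Rightarrow> nat list list \<Rightarrow> nat list list \<Rightarrow> nat list list \<Rightarrow> nat list list \<Rightarrow> bool" where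
  "Q_retract_check n IA IB IC IS IT \<longleftrightarrow>
     basis_umod_check n IA IB IC \<and>
     basis_hom_check 16 n IS IA IB IC Qa Qb Qc \<and> basis_hom_check n 16 IT Qa Qb Qc IA IB IC \<and>
     basis_wf 16 IS \<and> length IS = n \<and>
     basis_normalize n (basis_mult n IT IS) = basis_normalize n (map (\<lambda>j. [j]) [0..<n])"

lemma is_projective_if_Q_retract:
  assumes char: "CHAR('k::field) = 2"
    and V: "rdim (V :: 'k urep) = n" "ra V = basis_rect_mat n n IA" "rb V = basis_rect_mat n n IB"
      "rc V = basis_rect_mat n n IC"
    and check: "Q_retract_check n IA IB IC IS IT"
  shows "is_projective V"
proof (rule is_projective_retract[OF is_projective_Qmod[OF char]])
  from check have checks: "basis_umod_check n IA IB IC" "basis_hom_check 16 n IS IA IB IC Qa Qb Qc"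
    "basis_hom_check n 16 IT Qa Qb Qc IA IB IC"
    "basis_wf 16 IS \<and> length IS = n \<and>
       basis_normalize n (basis_mult n IT IS) = basis_normalize n (map (\<lambda>j. [j]) [0..<n])"
    unfolding Q_retract_check_def by auto
  show "is_umod V" by (rule is_umod_basisI[OF char V checks(1)])
  show "is_hom V Qmod (basis_rect_mat 16 n IS)" by (rule is_hom_basisI[OF char V _ _ _ _ checks(2)]) simp_all
  show "is_hom Qmod V (basis_rect_mat n 16 IT)" by (rule is_hom_basisI[OF char _ _ _ _ V checks(3)]) simp_all
  show "(basis_rect_mat n 16 IT :: 'k mat) * basis_rect_mat 16 n IS = 1\<^sub>m (rdim V)"
    unfolding V(1) by (rule basis_rect_mat_mult_eq_one[OF char checks(4)])
qed

lemma M_Q_retract: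
  "Q_retract_check 8 Ma Mb Mc [[3], [7], [11], [15], [0, 5, 10], [4, 9, 14], [8, 13], [12]]
     [[4], [2], [1], [0], [5], [3], [2], [1], [6], [], [3], [2], [7], [], [], [3]]"
  by code_simp

lemma N_Q_retract:
  "Q_retract_check 8 Na Nb Nc [[2, 7], [6, 11], [10, 15], [14], [1, 11], [5, 15], [9], [13]]
     [[2, 5], [4], [0], [], [3, 6], [5], [1], [], [7], [6], [2], [], [], [7], [3], []]"
  by code_simp

lemma dual_M_Q_retract:
  "Q_retract_check 8 (basis_transpose 8 8 Ma) (basis_transpose 8 8 Mb) (basis_transpose 8 8 Mc)
     [[12], [8, 13], [4, 9, 14], [0, 5, 10], [15], [11], [7], [3]]
     [[3], [5], [6], [7], [2], [4], [5], [6], [1], [], [4], [5], [0], [], [], [4]]"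
  by code_simp

lemma dual_N_Q_retract:
  "Q_retract_check 8 (basis_transpose 8 8 Na) (basis_transpose 8 8 Nb) (basis_transpose 8 8 Nc)
     [[13], [9], [5, 15], [1, 11], [14], [10, 15], [6, 11], [2, 7]]
     [[2, 5], [3], [7], [], [1, 4], [2], [6], [], [0], [1], [5], [], [], [0], [4], []]"
  by code_simp

context
  assumes char: "CHAR('k::field) = 2"
begin

lemma is_projective_M: "is_projective (M :: 'k urep)"
  by (rule is_projective_if_Q_retract[OF char _ _ _ _ M_Q_retract]) simp_all

lemma is_projective_N: "is_projective (N :: 'k urep)"
  by (rule is_projective_if_Q_retract[OF char _ _ _ _ N_Q_retract]) simp_all

lemma is_injective_M: "is_injective (M :: 'k urep)"
proof (rule is_injectiveI_dual_projective)
  show "is_umod (M :: 'k urep)" using is_projective_M unfolding is_projective_def by simp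
  show "is_projective (dual_urep (M :: 'k urep))"
    by (rule is_projective_if_Q_retract[OF char _ _ _ _ dual_M_Q_retract])
      (simp_all add: transpose_basis_rect_mat)
qed

lemma is_injective_N: "is_injective (N :: 'k urep)"
proof (rule is_injectiveI_dual_projective)
  show "is_umod (N :: 'k urep)" using is_projective_N unfolding is_projective_def by simp
  show "is_projective (dual_urep (N :: 'k urep))"
    by (rule is_projective_if_Q_retract[OF char _ _ _ _ dual_N_Q_retract])
      (simp_all add: transpose_basis_rect_mat)
qed

lemma is_umod_V0: "is_umod (V0 :: 'k urep)"
  by (rule is_umod_basisI[OF char]) (simp_all, code_simp)

lemma is_umod_V1: "is_umod (V1 :: 'k urep)"
  by (rule is_umod_basisI[OF char]) (simp_all, simp add: V1a_def V1b_def V1c_def, code_simp)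

end

section \<open>Submodules of \<open>M\<close> and \<open>N\<close>\<close>

definition vec8 :: "'k \<Rightarrow> 'k \<Rightarrow> 'k \<Rightarrow> 'k \<Rightarrow> 'k \<Rightarrow> 'k \<Rightarrow> 'k \<Rightarrow> 'k \<Rightarrow> 'k vec" where
  "vec8 a0 a1 a2 a3 a4 a5 a6 a7 = vec 8 (\<lambda>i. [a0, a1, a2, a3, a4, a5, a6, a7] ! i)"

lemma vec8_carrier [simp]: "vec8 a0 a1 a2 a3 a4 a5 a6 a7 \<in> carrier_vec 8"
  and dim_vec8 [simp]: "dim_vec (vec8 a0 a1 a2 a3 a4 a5 a6 a7) = 8"
  unfolding vec8_def by auto

lemma index_vec8 [simp]:
  "vec8 a0 a1 a2 a3 a4 a5 a6 a7 $ 0 = a0" "vec8 a0 a1 a2 a3 a4 a5 a6 a7 $ Suc 0 = a1"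
  "vec8 a0 a1 a2 a3 a4 a5 a6 a7 $ 1 = a1" "vec8 a0 a1 a2 a3 a4 a5 a6 a7 $ 2 = a2"
  "vec8 a0 a1 a2 a3 a4 a5 a6 a7 $ 3 = a3" "vec8 a0 a1 a2 a3 a4 a5 a6 a7 $ 4 = a4"
  "vec8 a0 a1 a2 a3 a4 a5 a6 a7 $ 5 = a5" "vec8 a0 a1 a2 a3 a4 a5 a6 a7 $ 6 = a6"
  "vec8 a0 a1 a2 a3 a4 a5 a6 a7 $ 7 = a7"
  unfolding vec8_def by simp_all

lemma less_8_cases: "(i::nat) < 8 \<Longrightarrow> i = 0 \<or> i = 1 \<or> i = 2 \<or> i = 3 \<or> i = 4 \<or> i = 5 \<or> i = 6 \<or> i = 7"
  by presburger

lemma vec8_eqI: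
  assumes "x \<in> carrier_vec 8" "x $ 0 = a0" "x $ 1 = a1" "x $ 2 = a2" "x $ 3 = a3"
    "x $ 4 = a4" "x $ 5 = a5" "x $ 6 = a6" "x $ 7 = a7"
  shows "x = vec8 a0 a1 a2 a3 a4 a5 a6 a7"
proof (rule eq_vecI)
  fix i assume "i < dim_vec (vec8 a0 a1 a2 a3 a4 a5 a6 a7)"
  then show "x $ i = vec8 a0 a1 a2 a3 a4 a5 a6 a7 $ i" using assms by (auto dest!: less_8_cases)
qed (use assms in simp)

lemma vec8_eta: "x \<in> carrier_vec 8 \<Longrightarrow> x = vec8 (x $ 0) (x $ 1) (x $ 2) (x $ 3) (x $ 4) (x $ 5) (x $ 6) (x $ 7)"
  by (rule vec8_eqI) auto

lemma vec8_cases: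
  assumes "x \<in> carrier_vec 8"
  obtains a0 a1 a2 a3 a4 a5 a6 a7 where "x = vec8 a0 a1 a2 a3 a4 a5 a6 a7"
  using vec8_eta[OF assms] by blast

lemma vec8_add [simp]:
  "vec8 a0 a1 a2 a3 a4 a5 a6 a7 + vec8 b0 b1 b2 b3 b4 b5 b6 b7 =
    vec8 (a0 + b0) (a1 + b1) (a2 + b2) (a3 + b3) (a4 + b4) (a5 + b5) (a6 + b6) (a7 + b7)"
  by (rule vec8_eqI) auto

lemma vec8_smult [simp]:
  "s \<cdot>\<^sub>v vec8 a0 a1 a2 a3 a4 a5 a6 a7 =
    vec8 (s * a0) (s * a1) (s * a2) (s * a3) (s * a4) (s * a5) (s * a6) (s * a7)"
  by (rule vec8_eqI) auto

lemma vec8_eq_iff [simp]: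
  "vec8 a0 a1 a2 a3 a4 a5 a6 a7 = vec8 b0 b1 b2 b3 b4 b5 b6 b7 \<longleftrightarrow>
    a0 = b0 \<and> a1 = b1 \<and> a2 = b2 \<and> a3 = b3 \<and> a4 = b4 \<and> a5 = b5 \<and> a6 = b6 \<and> a7 = b7"
  by (metis index_vec8)

lemma zero_vec8: "0\<^sub>v 8 = vec8 0 0 0 0 0 0 0 0"
  by (rule vec8_eqI) auto

lemma basis_rect_mat_mult_vec8:
  "basis_rect_mat 8 8 I *\<^sub>v vec8 a0 a1 a2 a3 a4 a5 a6 a7 =
    vec8 (\<Sum>l\<leftarrow>basis_transpose 8 8 I ! 0. [a0, a1, a2, a3, a4, a5, a6, a7] ! l)
      (\<Sum>l\<leftarrow>basis_transpose 8 8 I ! 1. [a0, a1, a2, a3, a4, a5, a6, a7] ! l)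
      (\<Sum>l\<leftarrow>basis_transpose 8 8 I ! 2. [a0, a1, a2, a3, a4, a5, a6, a7] ! l)
      (\<Sum>l\<leftarrow>basis_transpose 8 8 I ! 3. [a0, a1, a2, a3, a4, a5, a6, a7] ! l)
      (\<Sum>l\<leftarrow>basis_transpose 8 8 I ! 4. [a0, a1, a2, a3, a4, a5, a6, a7] ! l)
      (\<Sum>l\<leftarrow>basis_transpose 8 8 I ! 5. [a0, a1, a2, a3, a4, a5, a6, a7] ! l)
      (\<Sum>l\<leftarrow>basis_transpose 8 8 I ! 6. [a0, a1, a2, a3, a4, a5, a6, a7] ! l)
      (\<Sum>l\<leftarrow>basis_transpose 8 8 I ! 7. [a0, a1, a2, a3, a4, a5, a6, a7] ! l)"
proof -
  have entry: "(basis_rect_mat 8 8 I *\<^sub>v vec8 a0 a1 a2 a3 a4 a5 a6 a7) $ i =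
      (\<Sum>l\<leftarrow>basis_transpose 8 8 I ! i. [a0, a1, a2, a3, a4, a5, a6, a7] ! l)" if i: "i < 8" for i
  proof -
    have "set (basis_transpose 8 8 I ! i) \<subseteq> {0..<8}" using i by (auto simp: basis_transpose_def)
    then have "(\<Sum>l\<leftarrow>basis_transpose 8 8 I ! i. vec8 a0 a1 a2 a3 a4 a5 a6 a7 $ l) =
        (\<Sum>l\<leftarrow>basis_transpose 8 8 I ! i. [a0, a1, a2, a3, a4, a5, a6, a7] ! l)"
      by (intro arg_cong[where f = sum_list] map_cong) (auto simp: vec8_def)
    then show ?thesis by (rule trans[OF basis_rect_mat_mult_vec_index[OF vec8_carrier i]])
  qed
  show ?thesis
    by (rule vec8_eqI, rule mult_mat_vec_carrier[OF basis_rect_mat_carrier vec8_carrier], (rule entry, simp)+)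
qed

lemma basis_transpose_M_N:
  "basis_transpose 8 8 Ma = [[], [0], [1], [2], [], [4], [5], [6]]"
  "basis_transpose 8 8 Mb = [[1], [2], [4], [5], [], [6], [7], []]"
  "basis_transpose 8 8 Mc = [[0], [], [2], [], [], [5], [], [7]]"
  "basis_transpose 8 8 Na = [[], [0], [1], [2], [], [4], [5], [6]]"
  "basis_transpose 8 8 Nb = [[4], [2, 5], [3, 6], [7], [5], [6], [], []]"
  "basis_transpose 8 8 Nc = [[], [1], [], [3], [4], [], [6], []]"
  by code_simp+

lemma M_action_vec8 [simp]:
  "basis_rect_mat 8 8 Ma *\<^sub>v vec8 a0 a1 a2 a3 a4 a5 a6 a7 = vec8 0 a0 a1 a2 0 a4 a5 a6"
  "basis_rect_mat 8 8 Mb *\<^sub>v vec8 a0 a1 a2 a3 a4 a5 a6 a7 = vec8 a1 a2 a4 a5 0 a6 a7 0"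
  "basis_rect_mat 8 8 Mc *\<^sub>v vec8 a0 a1 a2 a3 a4 a5 a6 a7 = vec8 a0 0 a2 0 0 a5 0 a7"
  by (simp_all add: basis_rect_mat_mult_vec8 basis_transpose_M_N)

lemma N_action_vec8 [simp]:
  "basis_rect_mat 8 8 Na *\<^sub>v vec8 a0 a1 a2 a3 a4 a5 a6 a7 = vec8 0 a0 a1 a2 0 a4 a5 a6"
  "basis_rect_mat 8 8 Nb *\<^sub>v vec8 a0 a1 a2 a3 a4 a5 a6 a7 = vec8 a4 (a2 + a5) (a3 + a6) a7 a5 a6 0 0"
  "basis_rect_mat 8 8 Nc *\<^sub>v vec8 a0 a1 a2 a3 a4 a5 a6 a7 = vec8 0 a1 0 a3 a4 0 a6 0"
  by (simp_all add: basis_rect_mat_mult_vec8 basis_transpose_M_N)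

lemma is_submodD:
  assumes "is_submod L V" "x \<in> L"
  shows "x \<in> carrier_vec (rdim V)" "ra V *\<^sub>v x \<in> L" "rb V *\<^sub>v x \<in> L" "rc V *\<^sub>v x \<in> L"
    "y \<in> L \<Longrightarrow> x + y \<in> L" "s \<cdot>\<^sub>v x \<in> L"
  using assms unfolding is_submod_def by blast+

lemma is_submod_eq_carrier_8:
  assumes L: "is_submod L V" and "rdim V = 8"
    and "vec8 1 0 0 0 0 0 0 0 \<in> L" "vec8 0 1 0 0 0 0 0 0 \<in> L" "vec8 0 0 1 0 0 0 0 0 \<in> L"
      "vec8 0 0 0 1 0 0 0 0 \<in> L" "vec8 0 0 0 0 1 0 0 0 \<in> L" "vec8 0 0 0 0 0 1 0 0 \<in> L"
      "vec8 0 0 0 0 0 0 1 0 \<in> L" "vec8 0 0 0 0 0 0 0 (1::'k::field) \<in> L"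
  shows "L = carrier_vec 8"
proof
  show "L \<subseteq> carrier_vec 8" using L assms(2) unfolding is_submod_def by auto
  show "carrier_vec 8 \<subseteq> L"
  proof
    fix x :: "'k vec" assume x: "x \<in> carrier_vec 8"
    have "x = x $ 0 \<cdot>\<^sub>v vec8 1 0 0 0 0 0 0 0 + (x $ 1 \<cdot>\<^sub>v vec8 0 1 0 0 0 0 0 0 +
        (x $ 2 \<cdot>\<^sub>v vec8 0 0 1 0 0 0 0 0 + (x $ 3 \<cdot>\<^sub>v vec8 0 0 0 1 0 0 0 0 +
        (x $ 4 \<cdot>\<^sub>v vec8 0 0 0 0 1 0 0 0 + (x $ 5 \<cdot>\<^sub>v vec8 0 0 0 0 0 1 0 0 +
        (x $ 6 \<cdot>\<^sub>v vec8 0 0 0 0 0 0 1 0 + x $ 7 \<cdot>\<^sub>v vec8 0 0 0 0 0 0 0 1))))))"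
      by (subst vec8_eta[OF x]) simp
    also have "\<dots> \<in> L" using assms(3-) is_submodD[OF L] by metis
    finally show "x \<in> L" .
  qed
qed

lemma M_generated:
  assumes char: "CHAR('k::field) = 2" and L: "is_submod L (M :: 'k urep)"
    and l: "vec8 l0 l1 l2 l3 1 l5 l6 l7 \<in> L"
  shows "L = carrier_vec 8"
proof -
  note sub = is_submodD[OF L]
  txt \<open>Apply the idempotent \<open>1 + c\<close> to isolate the components in which \<open>c\<close> acts by 0.\<close>
  have u1: "vec8 0 l1 0 l3 1 0 l6 0 \<in> L"
    using sub(5)[OF l sub(4)[OF l]] char2_add_self[OF char] by simp
  have E7: "vec8 0 0 0 0 0 0 0 1 \<in> L" using sub(2)[OF sub(2)[OF sub(2)[OF u1]]] by simp
  have E6: "vec8 0 0 0 0 0 0 1 0 \<in> L" using sub(3)[OF E7] by simp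
  have E5: "vec8 0 0 0 0 0 1 0 0 \<in> L" using sub(3)[OF E6] by simp
  have E3: "vec8 0 0 0 1 0 0 0 0 \<in> L" using sub(3)[OF E5] by simp
  have u2: "vec8 0 l1 0 0 1 0 0 0 \<in> L"
    using sub(5)[OF u1 sub(5)[OF sub(6)[OF E3, of "- l3"] sub(6)[OF E6, of "- l6"]]] by simp
  have E1: "vec8 0 1 0 0 0 0 0 0 \<in> L" using sub(3)[OF sub(3)[OF u2]] by simp
  have E4: "vec8 0 0 0 0 1 0 0 0 \<in> L" using sub(5)[OF u2 sub(6)[OF E1, of "- l1"]] by simp
  have E2: "vec8 0 0 1 0 0 0 0 0 \<in> L" using sub(3)[OF E4] by simp
  have E0: "vec8 1 0 0 0 0 0 0 0 \<in> L" using sub(3)[OF E1] by simp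
  show ?thesis using is_submod_eq_carrier_8[OF L _ E0 E1 E2 E3 E4 E5 E6 E7] by simp
qed

lemma N_generated:
  assumes L: "is_submod L (N :: 'k::field urep)" and l: "vec8 l0 l1 l2 l3 1 0 0 l7 \<in> L"
  shows "L = carrier_vec 8"
proof -
  note sub = is_submodD[OF L]
  have u1: "vec8 0 l1 0 l3 1 0 0 0 \<in> L" using sub(4)[OF l] by simp
  have E7: "vec8 0 0 0 0 0 0 0 1 \<in> L" using sub(2)[OF sub(2)[OF sub(2)[OF u1]]] by simp
  have E3: "vec8 0 0 0 1 0 0 0 0 \<in> L" using sub(3)[OF E7] by simp
  have u2: "vec8 0 l1 0 0 1 0 0 0 \<in> L" using sub(5)[OF u1 sub(6)[OF E3, of "- l3"]] by simp
  have E0: "vec8 1 0 0 0 0 0 0 0 \<in> L" using sub(3)[OF u2] by simp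
  have E1: "vec8 0 1 0 0 0 0 0 0 \<in> L" using sub(2)[OF E0] by simp
  have E2: "vec8 0 0 1 0 0 0 0 0 \<in> L" using sub(2)[OF E1] by simp
  have E4: "vec8 0 0 0 0 1 0 0 0 \<in> L" using sub(5)[OF u2 sub(6)[OF E1, of "- l1"]] by simp
  have E5: "vec8 0 0 0 0 0 1 0 0 \<in> L" using sub(2)[OF E4] by simp
  have E6: "vec8 0 0 0 0 0 0 1 0 \<in> L" using sub(2)[OF E5] by simp
  show ?thesis using is_submod_eq_carrier_8[OF L _ E0 E1 E2 E3 E4 E5 E6 E7] by simp
qed

lemma submod_nonzero_vec8:
  assumes L: "is_submod L V" and "rdim V = 8" and "L \<noteq> {0\<^sub>v 8}"
  obtains y0 y1 y2 y3 y4 y5 y6 y7 where "vec8 y0 y1 y2 y3 y4 y5 y6 y7 \<in> L"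
    and "\<not> (y0 = 0 \<and> y1 = 0 \<and> y2 = 0 \<and> y3 = 0 \<and> y4 = 0 \<and> y5 = 0 \<and> y6 = 0 \<and> (y7 :: 'k::field) = 0)"
proof -
  have "0\<^sub>v 8 \<in> L" using L assms(2) unfolding is_submod_def by simp
  then obtain y where y: "y \<in> L" "y \<noteq> 0\<^sub>v 8" using assms(3) by blast
  then have "y \<in> carrier_vec 8" using is_submodD(1)[OF L] assms(2) by simp
  then obtain y0 y1 y2 y3 y4 y5 y6 y7 where "y = vec8 y0 y1 y2 y3 y4 y5 y6 y7" by (rule vec8_cases)
  then show ?thesis using that y by (simp add: zero_vec8)
qed

text \<open>The socle of \<open>M\<close> is spanned by \<open>v\<^sub>4\<close>.\<close>

lemma M_socle:
  assumes L: "is_submod L (M :: 'k::field urep)" and nonzero: "L \<noteq> {0\<^sub>v 8}"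
  shows "vec8 0 0 0 1 0 0 0 0 \<in> L"
proof -
  note sub = is_submodD[OF L]
  obtain y0 y1 y2 y3 y4 y5 y6 y7 where y: "vec8 y0 y1 y2 y3 y4 y5 y6 y7 \<in> L"
    and nz: "\<not> (y0 = 0 \<and> y1 = 0 \<and> y2 = 0 \<and> y3 = 0 \<and> y4 = 0 \<and> y5 = 0 \<and> y6 = 0 \<and> (y7 :: 'k) = 0)"
    by (rule submod_nonzero_vec8[OF L _ nonzero]) simp_all
  have w1: "vec8 0 0 0 y4 0 0 0 0 \<in> L" using sub(3)[OF sub(3)[OF sub(3)[OF sub(2)[OF sub(2)[OF sub(2)[OF y]]]]]] by simp
  have w2: "vec8 0 0 0 y5 0 0 0 0 \<in> L" using sub(3)[OF sub(3)[OF sub(3)[OF sub(2)[OF sub(2)[OF y]]]]] by simp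
  have w3: "vec8 0 0 0 y6 0 0 0 0 \<in> L" using sub(3)[OF sub(3)[OF sub(3)[OF sub(2)[OF y]]]] by simp
  have w4: "vec8 0 0 0 y0 0 0 0 y4 \<in> L" using sub(2)[OF sub(2)[OF sub(2)[OF y]]] by simp
  have w5: "vec8 0 0 y0 y1 0 0 y4 y5 \<in> L" using sub(2)[OF sub(2)[OF y]] by simp
  have w6: "vec8 0 y0 y1 y2 0 y4 y5 y6 \<in> L" using sub(2)[OF y] by simp
  have w7: "vec8 y4 0 0 y7 0 0 0 0 \<in> L" using sub(3)[OF sub(3)[OF sub(3)[OF y]]] by simp
  txt \<open>Whichever coordinate of \<open>y\<close> is the first nonzero one in the order
    \<open>w\<^sub>1, w\<^sub>2, w\<^sub>3, v\<^sub>1, v\<^sub>2, v\<^sub>3, w\<^sub>4, v\<^sub>4\<close>, a word in \<open>a\<close> and \<open>b\<close> moves it to \<open>v\<^sub>4\<close>.\<close>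
  have "\<exists>s. s \<noteq> 0 \<and> vec8 0 0 0 s 0 0 0 0 \<in> L"
  proof -
    consider "y4 \<noteq> 0" | "y4 = 0" "y5 \<noteq> 0" | "y4 = 0" "y5 = 0" "y6 \<noteq> 0"
      | "y4 = 0" "y5 = 0" "y6 = 0" "y0 \<noteq> 0" | "y4 = 0" "y5 = 0" "y6 = 0" "y0 = 0" "y1 \<noteq> 0"
      | "y4 = 0" "y5 = 0" "y6 = 0" "y0 = 0" "y1 = 0" "y2 \<noteq> 0"
      | "y4 = 0" "y5 = 0" "y6 = 0" "y0 = 0" "y1 = 0" "y2 = 0" "y7 \<noteq> 0"
      | "y4 = 0" "y5 = 0" "y6 = 0" "y0 = 0" "y1 = 0" "y2 = 0" "y7 = 0" "y3 \<noteq> 0"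
      using nz by blast
    then show ?thesis
      by cases (use w1 w2 w3 w4 w5 w6 w7 y in auto)
  qed
  then obtain s where "s \<noteq> 0" "vec8 0 0 0 s 0 0 0 0 \<in> L" by blast
  then show ?thesis using sub(6)[of _ "1 / s"] by force
qed

text \<open>Every nonzero submodule of \<open>N\<close> meets the copy of \<open>V\<^sub>1\<close> spanned by \<open>v\<^sub>2, v\<^sub>3, v\<^sub>4\<close>.\<close>

lemma N_socle:
  assumes L: "is_submod L (N :: 'k::field urep)" and nonzero: "L \<noteq> {0\<^sub>v 8}"
  shows "\<exists>s1 s2 s3. \<not> (s1 = 0 \<and> s2 = 0 \<and> s3 = 0) \<and> vec8 0 s1 s2 s3 0 0 0 0 \<in> L"
proof -
  note sub = is_submodD[OF L]
  obtain y0 y1 y2 y3 y4 y5 y6 y7 where y: "vec8 y0 y1 y2 y3 y4 y5 y6 y7 \<in> L"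
    and nz: "\<not> (y0 = 0 \<and> y1 = 0 \<and> y2 = 0 \<and> y3 = 0 \<and> y4 = 0 \<and> y5 = 0 \<and> y6 = 0 \<and> (y7 :: 'k) = 0)"
    by (rule submod_nonzero_vec8[OF L _ nonzero]) simp_all
  have w1: "vec8 0 0 y0 y4 0 0 0 0 \<in> L" using sub(3)[OF sub(2)[OF sub(2)[OF sub(2)[OF y]]]] by simp
  have w2: "vec8 0 y0 (y1 + y4) y5 0 y4 0 0 \<in> L" using sub(3)[OF sub(2)[OF sub(2)[OF y]]] by simp
  have w3: "vec8 0 (y1 + y4) (y2 + y5) y6 y4 y5 0 0 \<in> L" using sub(3)[OF sub(2)[OF y]] by simp
  have w4: "vec8 y4 (y2 + y5) (y3 + y6) y7 y5 y6 0 0 \<in> L" using sub(3)[OF y] by simp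
  have w5: "vec8 0 y0 y1 y2 0 y4 y5 y6 \<in> L" using sub(2)[OF y] by simp
  consider "y4 \<noteq> 0" | "y4 = 0" "y5 \<noteq> 0" | "y4 = 0" "y5 = 0" "y6 \<noteq> 0"
    | "y4 = 0" "y5 = 0" "y6 = 0" "y7 \<noteq> 0" | "y4 = 0" "y5 = 0" "y6 = 0" "y7 = 0" "y0 \<noteq> 0"
    | "y4 = 0" "y5 = 0" "y6 = 0" "y7 = 0" "y0 = 0"
    by blast
  then show ?thesis
    by cases (use w1 w2 w3 w4 w5 y nz in auto)
qed

section \<open>Projective covers and injective envelopes of \<open>V\<^sub>0\<close> and \<open>V\<^sub>1\<close>\<close>

lemma is_projective_coverI:
  assumes P: "is_projective P" and V: "is_umod V" and p: "is_hom P V p" "hom_surj P V p"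
    and x0: "x0 \<in> carrier_vec (rdim P)"
    and generated: "\<And>L l. is_submod L P \<Longrightarrow> l \<in> L \<Longrightarrow> p *\<^sub>v l = p *\<^sub>v x0 \<Longrightarrow> L = carrier_vec (rdim P)"
  shows "is_projective_cover P p V"
  unfolding is_projective_cover_def
proof (intro conjI allI impI)
  fix L
  assume "is_submod L P \<and> (\<forall>x \<in> carrier_vec (rdim P). \<exists>l\<in>L. \<exists>k \<in> carrier_vec (rdim P).
      p *\<^sub>v k = 0\<^sub>v (rdim V) \<and> x = l + k)"
  then obtain l k where L: "is_submod L P" and l: "l \<in> L" and k: "k \<in> carrier_vec (rdim P)"
    and pk: "p *\<^sub>v k = 0\<^sub>v (rdim V)" and x0_eq: "x0 = l + k"
    using x0 by blast
  have "p *\<^sub>v x0 = p *\<^sub>v l + p *\<^sub>v k"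
    using x0_eq is_hom_carrier[OF p(1)] is_submodD(1)[OF L l] k by (simp add: mult_add_distrib_mat_vec)
  then have "p *\<^sub>v l = p *\<^sub>v x0" using pk is_hom_carrier[OF p(1)] is_submodD(1)[OF L l] by simp
  then show "L = carrier_vec (rdim P)" by (rule generated[OF L l])
qed (use assms in auto)

lemma less_3_cases: "(i::nat) < 3 \<Longrightarrow> i = 0 \<or> i = 1 \<or> i = 2"
  by presburger

lemma M_to_V0_vec:
  assumes x: "x \<in> carrier_vec 8"
  shows "basis_rect_mat 1 8 [[], [], [], [], [0], [], [], []] *\<^sub>v x = vec 1 (\<lambda>_. x $ 4)"
proof -
  have "basis_transpose 1 8 [[], [], [], [], [0], [], [], []] = [[4]]" by code_simp
  then show ?thesis using basis_rect_mat_mult_vec_index[of x 8 0 1] x by (intro eq_vecI) auto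
qed

lemma N_to_V1_vec:
  assumes x: "x \<in> carrier_vec 8"
  shows "basis_rect_mat 3 8 [[], [], [], [], [0], [1], [2], []] *\<^sub>v x = vec 3 (\<lambda>i. x $ (i + 4))"
proof -
  have "basis_transpose 3 8 [[], [], [], [], [0], [1], [2], []] = [[4], [5], [6]]" by code_simp
  then show ?thesis
    using basis_rect_mat_mult_vec_index[of x 8 _ 3] x by (intro eq_vecI) (auto dest!: less_3_cases)
qed

lemma V0_to_M_vec:
  assumes x: "x \<in> carrier_vec 1"
  shows "basis_rect_mat 8 1 [[3]] *\<^sub>v x = vec8 0 0 0 (x $ 0) 0 0 0 0"
proof -
  have bt: "basis_transpose 8 1 [[3]] = [[], [], [], [0], [], [], [], []]" by code_simp
  have entry: "(basis_rect_mat 8 1 [[3]] *\<^sub>v x) $ i = vec8 0 0 0 (x $ 0) 0 0 0 0 $ i" if i: "i < 8" for i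
    using basis_rect_mat_mult_vec_index[OF x i, of "[[3]]"] i unfolding bt by (auto dest!: less_8_cases)
  show ?thesis by (rule eq_vecI, rule entry, simp_all)
qed

lemma V1_to_N_vec:
  assumes x: "x \<in> carrier_vec 3"
  shows "basis_rect_mat 8 3 [[1], [2], [3]] *\<^sub>v x = vec8 0 (x $ 0) (x $ 1) (x $ 2) 0 0 0 0"
proof -
  have bt: "basis_transpose 8 3 [[1], [2], [3]] = [[], [0], [1], [2], [], [], [], []]" by code_simp
  have entry: "(basis_rect_mat 8 3 [[1], [2], [3]] *\<^sub>v x) $ i = vec8 0 (x $ 0) (x $ 1) (x $ 2) 0 0 0 0 $ i"
    if i: "i < 8" for i
    using basis_rect_mat_mult_vec_index[OF x i, of "[[1], [2], [3]]"] i unfolding bt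
    by (auto dest!: less_8_cases)
  show ?thesis by (rule eq_vecI, rule entry, simp_all)
qed

lemma M_V0_hom_checks:
  "basis_hom_check 1 8 [[], [], [], [], [0], [], [], []] Ma Mb Mc [[]] [[]] [[]]"
  "basis_hom_check 8 1 [[3]] [[]] [[]] [[]] Ma Mb Mc"
  by code_simp+

lemma N_V1_hom_checks:
  "basis_hom_check 3 8 [[], [], [], [], [0], [1], [2], []] Na Nb Nc V1a V1b V1c"
  "basis_hom_check 8 3 [[1], [2], [3]] V1a V1b V1c Na Nb Nc"
  by code_simp+

context
  assumes char: "CHAR('k::field) = 2"
begin

lemma projective_cover_M:
  "is_projective_cover (M :: 'k urep) (basis_rect_mat 1 8 [[], [], [], [], [0], [], [], []]) V0"
proof (rule is_projective_coverI[OF is_projective_M[OF char] is_umod_V0[OF char]])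
  let ?p = "basis_rect_mat 1 8 [[], [], [], [], [0], [], [], []] :: 'k mat"
  show "is_hom M V0 ?p" by (rule is_hom_basisI[OF char _ _ _ _ _ _ _ _ M_V0_hom_checks(1)]) simp_all
  show "hom_surj M V0 ?p" unfolding hom_surj_def
  proof
    fix y :: "'k vec" assume y: "y \<in> carrier_vec (rdim V0)"
    have "?p *\<^sub>v vec8 0 0 0 0 (y $ 0) 0 0 0 = vec 1 (\<lambda>_. vec8 0 0 0 0 (y $ 0) 0 0 0 $ 4)"
      by (rule M_to_V0_vec) simp
    also have "\<dots> = y" using y by (intro eq_vecI) auto
    finally show "\<exists>x \<in> carrier_vec (rdim M). ?p *\<^sub>v x = y"
      by (intro bexI[of _ "vec8 0 0 0 0 (y $ 0) 0 0 0"]) simp_all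
  qed
  show "vec8 0 0 0 0 1 0 0 0 \<in> carrier_vec (rdim M)" by simp
  fix L l assume L: "is_submod L M" and l: "l \<in> L" and pl: "?p *\<^sub>v l = ?p *\<^sub>v vec8 0 0 0 0 1 0 0 0"
  obtain l0 l1 l2 l3 l4 l5 l6 l7 where l_eq: "l = vec8 l0 l1 l2 l3 l4 l5 l6 l7"
    using is_submodD(1)[OF L l] by (auto elim: vec8_cases)
  have "vec 1 (\<lambda>_. l4) $ 0 = vec 1 (\<lambda>_. (1::'k)) $ 0"
    using pl unfolding l_eq M_to_V0_vec[OF vec8_carrier] by simp
  then have "l4 = 1" by simp
  then show "L = carrier_vec (rdim M)" using M_generated[OF char L] l l_eq by simp
qed

lemma projective_cover_N:
  "is_projective_cover (N :: 'k urep) (basis_rect_mat 3 8 [[], [], [], [], [0], [1], [2], []]) V1"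
proof (rule is_projective_coverI[OF is_projective_N[OF char] is_umod_V1[OF char]])
  let ?p = "basis_rect_mat 3 8 [[], [], [], [], [0], [1], [2], []] :: 'k mat"
  show "is_hom N V1 ?p" by (rule is_hom_basisI[OF char _ _ _ _ _ _ _ _ N_V1_hom_checks(1)]) simp_all
  show "hom_surj N V1 ?p" unfolding hom_surj_def
  proof
    fix y :: "'k vec" assume y: "y \<in> carrier_vec (rdim V1)"
    have "?p *\<^sub>v vec8 0 0 0 0 (y $ 0) (y $ 1) (y $ 2) 0 =
        vec 3 (\<lambda>i. vec8 0 0 0 0 (y $ 0) (y $ 1) (y $ 2) 0 $ (i + 4))"
      by (rule N_to_V1_vec) simp
    also have "\<dots> = y" using y by (intro eq_vecI) (auto dest!: less_3_cases)
    finally show "\<exists>x \<in> carrier_vec (rdim N). ?p *\<^sub>v x = y"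
      by (intro bexI[of _ "vec8 0 0 0 0 (y $ 0) (y $ 1) (y $ 2) 0"]) simp_all
  qed
  show "vec8 0 0 0 0 1 0 0 0 \<in> carrier_vec (rdim N)" by simp
  fix L l assume L: "is_submod L N" and l: "l \<in> L" and pl: "?p *\<^sub>v l = ?p *\<^sub>v vec8 0 0 0 0 1 0 0 0"
  obtain l0 l1 l2 l3 l4 l5 l6 l7 where l_eq: "l = vec8 l0 l1 l2 l3 l4 l5 l6 l7"
    using is_submodD(1)[OF L l] by (auto elim: vec8_cases)
  have "vec 3 (\<lambda>i. vec8 l0 l1 l2 l3 l4 l5 l6 l7 $ (i + 4)) = vec 3 (\<lambda>i. vec8 0 0 0 0 1 0 0 0 $ (i + 4))"
    using pl unfolding l_eq N_to_V1_vec[OF vec8_carrier] .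
  from arg_cong[OF this, of "\<lambda>v. v $ 0"] arg_cong[OF this, of "\<lambda>v. v $ 1"] arg_cong[OF this, of "\<lambda>v. v $ 2"]
  have "l4 = (1::'k)" "l5 = 0" "l6 = 0" by simp_all
  then show "L = carrier_vec (rdim N)" using N_generated[OF L] l l_eq by simp
qed

lemma injective_envelope_M: "is_injective_envelope (M :: 'k urep) (basis_rect_mat 8 1 [[3]]) V0"
  unfolding is_injective_envelope_def
proof (intro conjI allI impI)
  let ?i = "basis_rect_mat 8 1 [[3]] :: 'k mat"
  show "is_injective (M :: 'k urep)" by (rule is_injective_M[OF char])
  show "is_umod (V0 :: 'k urep)" by (rule is_umod_V0[OF char])
  show "is_hom V0 M ?i" by (rule is_hom_basisI[OF char _ _ _ _ _ _ _ _ M_V0_hom_checks(2)]) simp_all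
  show "hom_inj V0 M ?i" unfolding hom_inj_def
  proof (intro ballI impI)
    fix x :: "'k vec" assume x: "x \<in> carrier_vec (rdim V0)" and z: "?i *\<^sub>v x = 0\<^sub>v (rdim M)"
    have x1: "x \<in> carrier_vec 1" using x by simp
    have "vec8 0 0 0 (x $ 0) 0 0 0 0 = 0\<^sub>v 8" using z unfolding V0_to_M_vec[OF x1] by simp
    then show "x = 0\<^sub>v (rdim V0)" using x1 by (intro eq_vecI) (auto simp: zero_vec8)
  qed
  fix L :: "'k vec set" assume "is_submod L M \<and> L \<noteq> {0\<^sub>v (rdim M)}"
  then have "is_submod L M" "L \<noteq> {0\<^sub>v 8}" by simp_all
  then have "vec8 0 0 0 1 0 0 0 0 \<in> L" by (rule M_socle)
  moreover have "?i *\<^sub>v vec 1 (\<lambda>_. 1) = vec8 0 0 0 (vec 1 (\<lambda>_. 1) $ 0) 0 0 0 0"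
    by (rule V0_to_M_vec) simp
  ultimately show "\<exists>x \<in> carrier_vec (rdim V0). ?i *\<^sub>v x \<in> L \<and> ?i *\<^sub>v x \<noteq> 0\<^sub>v (rdim M)"
    by (intro bexI[of _ "vec 1 (\<lambda>_. 1)"]) (auto simp: zero_vec8)
qed

lemma injective_envelope_N: "is_injective_envelope (N :: 'k urep) (basis_rect_mat 8 3 [[1], [2], [3]]) V1"
  unfolding is_injective_envelope_def
proof (intro conjI allI impI)
  let ?i = "basis_rect_mat 8 3 [[1], [2], [3]] :: 'k mat"
  show "is_injective (N :: 'k urep)" by (rule is_injective_N[OF char])
  show "is_umod (V1 :: 'k urep)" by (rule is_umod_V1[OF char])
  show "is_hom V1 N ?i" by (rule is_hom_basisI[OF char _ _ _ _ _ _ _ _ N_V1_hom_checks(2)]) simp_all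
  show "hom_inj V1 N ?i" unfolding hom_inj_def
  proof (intro ballI impI)
    fix x :: "'k vec" assume x: "x \<in> carrier_vec (rdim V1)" and z: "?i *\<^sub>v x = 0\<^sub>v (rdim N)"
    have x3: "x \<in> carrier_vec 3" using x by simp
    have "vec8 0 (x $ 0) (x $ 1) (x $ 2) 0 0 0 0 = 0\<^sub>v 8" using z unfolding V1_to_N_vec[OF x3] by simp
    then show "x = 0\<^sub>v (rdim V1)" using x3 by (intro eq_vecI) (auto simp: zero_vec8 dest!: less_3_cases)
  qed
  fix L :: "'k vec set" assume "is_submod L N \<and> L \<noteq> {0\<^sub>v (rdim N)}"
  then have "is_submod L N" "L \<noteq> {0\<^sub>v 8}" by simp_all
  then obtain s1 s2 s3 where s: "\<not> (s1 = 0 \<and> s2 = 0 \<and> s3 = 0)" "vec8 0 s1 s2 s3 0 0 0 0 \<in> L"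
    using N_socle by blast
  have "?i *\<^sub>v vec 3 (\<lambda>i. [s1, s2, s3] ! i) =
      vec8 0 (vec 3 (\<lambda>i. [s1, s2, s3] ! i) $ 0) (vec 3 (\<lambda>i. [s1, s2, s3] ! i) $ 1)
        (vec 3 (\<lambda>i. [s1, s2, s3] ! i) $ 2) 0 0 0 0"
    by (rule V1_to_N_vec) simp
  then show "\<exists>x \<in> carrier_vec (rdim V1). ?i *\<^sub>v x \<in> L \<and> ?i *\<^sub>v x \<noteq> 0\<^sub>v (rdim N)"
    using s by (intro bexI[of _ "vec 3 (\<lambda>i. [s1, s2, s3] ! i)"]) (auto simp: zero_vec8)
qed

end

theorem proposition3p11:
  assumes "CHAR('k::alg_closed_field) = 2"
  shows "((\<exists>p. is_projective_cover (M::'k urep) p V0) \<and>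
          (\<forall>P p. is_projective_cover P p (V0::'k urep) \<longrightarrow> umod_iso P M)) \<and>
         ((\<exists>i. is_injective_envelope (M::'k urep) i V0) \<and>
          (\<forall>I i. is_injective_envelope I i (V0::'k urep) \<longrightarrow> umod_iso I M)) \<and>
         ((\<exists>p. is_projective_cover (N::'k urep) p V1) \<and>
          (\<forall>P p. is_projective_cover P p (V1::'k urep) \<longrightarrow> umod_iso P N)) \<and>
         ((\<exists>i. is_injective_envelope (N::'k urep) i V1) \<and>
          (\<forall>I i. is_injective_envelope I i (V1::'k urep) \<longrightarrow> umod_iso I N))"
  using projective_cover_M[OF assms] projective_cover_N[OF assms]
    injective_envelope_M[OF assms] injective_envelope_N[OF assms]
    projective_cover_unique injective_envelope_unique
  by blast

end
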